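(* Let $\mathcal{H}$ be a Hilbert space, let $C\in\mathcal{B}(\mathcal{H})$ be similar to a contraction, and let $E\in\mathcal{B}(\mathcal{H})$ have spectral radius $r(E)<1$ and satisfy $EC=0$. Then $T=C+E$ is similar to a contraction.
   Context: An operator $T$ is a zero-product perturbation of $C$ by $E$ if $T=C+E$ and $EC=0$. An operator $R\in\mathcal{B}(\mathcal{H})$ is similar to a contraction if there is an invertible $L\in\mathcal{B}(\mathcal{H})$ with $\|L^{-1}RL\|\le 1$. *)

theory Defs
  imports "HOL-Analysis.Analysis"
begin

text \<open>A complex Hilbert space: a real Hilbert space (real_inner + complete_space,
  the real inner product being the real part of the complex one) equipped with a
  complex scalar multiplication extending the real one, for which multiplication
  by the imaginary unit is isometric. Every complex Hilbert space arises this way.\<close>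

class complex_hilbert = real_inner + complete_space +
  fixes scaleC :: "complex \<Rightarrow> 'a \<Rightarrow> 'a" (infixr "*\<^sub>C" 75)
  assumes scaleC_add_right: "a *\<^sub>C (x + y) = a *\<^sub>C x + a *\<^sub>C y"
    and scaleC_add_left: "(a + b) *\<^sub>C x = a *\<^sub>C x + b *\<^sub>C x"
    and scaleC_scaleC: "a *\<^sub>C (b *\<^sub>C x) = (a * b) *\<^sub>C x"
    and scaleC_of_real: "complex_of_real r *\<^sub>C x = r *\<^sub>R x"
    and norm_scaleC_ii: "norm (\<i> *\<^sub>C x) = norm x"

definition bop :: "('a::complex_hilbert \<Rightarrow>\<^sub>L 'a) set" where
  "bop = {A. \<forall>c x. blinfun_apply A (c *\<^sub>C x) = c *\<^sub>C blinfun_apply A x}"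

definition invertible_bop :: "('a::complex_hilbert \<Rightarrow>\<^sub>L 'a) \<Rightarrow> bool" where
  "invertible_bop L \<longleftrightarrow> L \<in> bop \<and>
     (\<exists>M\<in>bop. M o\<^sub>L L = id_blinfun \<and> L o\<^sub>L M = id_blinfun)"

definition similar_to_contraction :: "('a::complex_hilbert \<Rightarrow>\<^sub>L 'a) \<Rightarrow> bool" where
  "similar_to_contraction R \<longleftrightarrow>
     (\<exists>L M. invertible_bop L \<and> M \<in> bop \<and> M o\<^sub>L L = id_blinfun \<and> L o\<^sub>L M = id_blinfun
        \<and> norm (M o\<^sub>L R o\<^sub>L L) \<le> 1)"

definition bop_spectrum :: "('a::complex_hilbert \<Rightarrow>\<^sub>L 'a) \<Rightarrow> complex set" where
  "bop_spectrum E = {z. \<not> (\<exists>M\<in>bop. \<forall>x.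
      blinfun_apply M (blinfun_apply E x - z *\<^sub>C x) = x \<and>
      blinfun_apply E (blinfun_apply M x) - z *\<^sub>C blinfun_apply M x = x)}"

definition spectral_radius :: "('a::complex_hilbert \<Rightarrow>\<^sub>L 'a) \<Rightarrow> real" where
  "spectral_radius E = Sup (cmod ` bop_spectrum E)"

end

(*
  After a similarity we may assume ||C|| <= 1.  Since r(E) < 1, the resolvent w |-> (I - w E)^-1 is
  holomorphic on a disc of radius s > 1, so Cauchy's estimate gives ||E^n|| <= K rho^n with rho < 1.
  As E C = 0 we have E T = E^2 for T = C + E, hence E^(k+1) T = E^(k+2), and the powers of T are
  bounded by some P.  The selfadjoint operator

    G = I + sum_k [ (T^(k+1))* E^(k+1) + (E^(k+1))* T^(k+1) + b_k (E^(k+1))* E^(k+1) ],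
    b_k = P^2 / eps_k,   eps_k = (1 - rho) rho^k / 2,

  satisfies <G x, x> >= ||x||^2 / 2, because by AM-GM the k-th term is at least -eps_k ||x||^2,
  and <G (T x), T x> <= <G x, x>: the k-th term at T x is the (k+1)-st term at x with the smaller
  weight b_k, and ||T x||^2 exceeds ||x||^2 by at most the 0-th term because ||C|| <= 1.
  With W = G^(1/2), obtained from the binomial series, W T W^-1 is a contraction.
*)

theory Submission
  imports Defs "HOL-Complex_Analysis.Complex_Analysis"
begin

section \<open>Complex scalar multiplication\<close>

subclass (in complex_hilbert) banach ..

lemma scaleC_one [simp]: "1 *\<^sub>C x = (x::'a::complex_hilbert)"
  using scaleC_of_real[of 1 x] by simp

lemma scaleC_zero_left [simp]: "0 *\<^sub>C x = (0::'a::complex_hilbert)"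
  using scaleC_of_real[of 0 x] by simp

lemma scaleC_zero_right [simp]: "c *\<^sub>C 0 = (0::'a::complex_hilbert)"
  by (metis add_cancel_right_right scaleC_add_right)

lemma scaleC_minus_left: "(- c) *\<^sub>C x = - (c *\<^sub>C x :: 'a::complex_hilbert)"
  by (metis add_eq_0_iff scaleC_add_left scaleC_zero_left add.right_inverse)

lemma scaleC_minus_right: "c *\<^sub>C (- x) = - (c *\<^sub>C x :: 'a::complex_hilbert)"
  by (metis add_eq_0_iff scaleC_add_right scaleC_zero_right)

lemma scaleC_diff_left: "(c - d) *\<^sub>C x = c *\<^sub>C x - d *\<^sub>C (x::'a::complex_hilbert)"
  by (metis diff_conv_add_uminus scaleC_add_left scaleC_minus_left)

lemma scaleC_diff_right: "c *\<^sub>C (x - y) = c *\<^sub>C x - c *\<^sub>C (y::'a::complex_hilbert)"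
  by (metis diff_conv_add_uminus scaleC_add_right scaleC_minus_right)

lemma scaleC_scaleR_commute: "c *\<^sub>C (r *\<^sub>R x) = r *\<^sub>R (c *\<^sub>C x :: 'a::complex_hilbert)"
  by (metis scaleC_of_real scaleC_scaleC mult.commute)

lemma scaleC_ii_ii [simp]: "\<i> *\<^sub>C \<i> *\<^sub>C x = - (x::'a::complex_hilbert)"
  using scaleC_of_real[of "-1" x] by (simp add: scaleC_scaleC)

lemma scaleC_Re_Im: "c *\<^sub>C x = Re c *\<^sub>R x + Im c *\<^sub>R (\<i> *\<^sub>C x :: 'a::complex_hilbert)"
proof -
  have "c = complex_of_real (Re c) + complex_of_real (Im c) * \<i>"
    by (simp add: complex_eq_iff)
  then have "c *\<^sub>C x = complex_of_real (Re c) *\<^sub>C x + complex_of_real (Im c) *\<^sub>C \<i> *\<^sub>C x"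
    by (metis scaleC_add_left scaleC_scaleC)
  then show ?thesis
    by (simp add: scaleC_of_real)
qed

lemma inner_scaleC_ii [simp]:
  "inner (\<i> *\<^sub>C x) (\<i> *\<^sub>C y) = inner x (y::'a::complex_hilbert)"
proof -
  have "inner (\<i> *\<^sub>C x) (\<i> *\<^sub>C y)
      = ((norm (\<i> *\<^sub>C (x + y)))\<^sup>2 - (norm (\<i> *\<^sub>C x))\<^sup>2 - (norm (\<i> *\<^sub>C y))\<^sup>2) / 2"
    by (simp only: dot_norm scaleC_add_right)
  also have "\<dots> = inner x y"
    by (simp only: norm_scaleC_ii dot_norm)
  finally show ?thesis .
qed

lemma inner_scaleC_ii_left: "inner (\<i> *\<^sub>C x) y = - inner x (\<i> *\<^sub>C y :: 'a::complex_hilbert)"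
proof -
  have "inner (\<i> *\<^sub>C x) y = inner (\<i> *\<^sub>C \<i> *\<^sub>C x) (\<i> *\<^sub>C y)"
    by (rule inner_scaleC_ii[symmetric])
  also have "\<dots> = - inner x (\<i> *\<^sub>C y)"
    by simp
  finally show ?thesis .
qed

lemma inner_scaleC_ii_self [simp]: "inner (\<i> *\<^sub>C x) (x::'a::complex_hilbert) = 0"
  using inner_scaleC_ii_left[of x x] by (simp add: inner_commute)

lemma norm_scaleC: "norm (c *\<^sub>C x) = cmod c * norm (x::'a::complex_hilbert)"
proof -
  have "(norm (c *\<^sub>C x))\<^sup>2 = inner (Re c *\<^sub>R x + Im c *\<^sub>R \<i> *\<^sub>C x) (Re c *\<^sub>R x + Im c *\<^sub>R \<i> *\<^sub>C x)"
    by (simp only: scaleC_Re_Im[of c x] power2_norm_eq_inner)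
  also have "\<dots> = ((Re c)\<^sup>2 + (Im c)\<^sup>2) * inner x x"
    by (simp add: inner_add_left inner_add_right inner_commute[of x "\<i> *\<^sub>C x"]
        power2_eq_square algebra_simps)
  also have "\<dots> = (cmod c * norm x)\<^sup>2"
    by (simp add: cmod_def power_mult_distrib dot_square_norm)
  finally show ?thesis
    by (simp add: power2_eq_iff_nonneg)
qed

lemma bounded_linear_scaleC: "bounded_linear (\<lambda>x::'a::complex_hilbert. c *\<^sub>C x)"
  by (rule bounded_linear_intro[where K="cmod c"])
    (simp_all add: scaleC_add_right scaleC_scaleR_commute norm_scaleC)

section \<open>Bounded operators and their powers\<close>

interpretation compose: bounded_bilinear "(o\<^sub>L)"
  by (rule bounded_bilinear_blinfun_compose)

lemma blinfun_compose_assoc: "(A o\<^sub>L B) o\<^sub>L C = A o\<^sub>L (B o\<^sub>L C)"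
  by (rule blinfun_eqI) simp

lemma blinfun_compose_id [simp]: "id_blinfun o\<^sub>L A = A" "A o\<^sub>L id_blinfun = A"
  by (auto intro: blinfun_eqI)

lemma blinfun_compose_eq_id_iff: "A o\<^sub>L B = id_blinfun \<longleftrightarrow> (\<forall>x. A (B x) = x)"
  by (metis blinfun_apply_blinfun_compose blinfun_apply_id_blinfun blinfun_eqI)

lemma blinfun_inverse_diff:
  fixes A B R S :: "'a::real_normed_vector \<Rightarrow>\<^sub>L 'a"
  assumes "R o\<^sub>L A = id_blinfun" and "B o\<^sub>L S = id_blinfun"
  shows "R - S = R o\<^sub>L (B - A) o\<^sub>L S"
  using assms unfolding blinfun_compose_eq_id_iff
  by (intro blinfun_eqI) (simp add: blinfun.diff_left blinfun.diff_right)

lemma norm_blinfun_compose3: "norm (A o\<^sub>L B o\<^sub>L C) \<le> norm A * norm B * norm C"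
proof -
  have "norm (A o\<^sub>L B o\<^sub>L C) \<le> norm (A o\<^sub>L B) * norm C"
    by (rule norm_blinfun_compose)
  also have "\<dots> \<le> norm A * norm B * norm C"
    by (intro mult_right_mono norm_blinfun_compose) simp
  finally show ?thesis .
qed

lemma norm_blinfun_apply_le_if_norm_le_1:
  fixes C :: "'a::real_normed_vector \<Rightarrow>\<^sub>L 'b::real_normed_vector"
  shows "norm C \<le> 1 \<Longrightarrow> norm (C x) \<le> norm x"
  using norm_blinfun[of C x] mult_right_mono[of "norm C" 1 "norm x"] by simp

lemma norm_inverse_diff_le:
  fixes A B R S :: "'a::real_normed_vector \<Rightarrow>\<^sub>L 'a"
  assumes "R o\<^sub>L A = id_blinfun" and "B o\<^sub>L S = id_blinfun"
    and small: "norm (A - B) * norm S \<le> 1 / 2"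
  shows "norm (R - S) \<le> 2 * (norm S)\<^sup>2 * norm (A - B)"
proof -
  have diff: "norm (R - S) \<le> norm R * (norm (A - B) * norm S)"
    using norm_blinfun_compose3[of R "B - A" S] norm_minus_commute[of B A]
    by (simp add: blinfun_inverse_diff[OF assms(1,2)] mult.assoc)
  also have "\<dots> \<le> norm R * (1 / 2)"
    using small by (rule mult_left_mono) simp
  finally have "norm R \<le> 2 * norm S"
    using norm_triangle_sub[of R S] by linarith
  then have "norm R * (norm (A - B) * norm S) \<le> 2 * norm S * (norm (A - B) * norm S)"
    by (rule mult_right_mono) simp
  with diff show ?thesis
    by (simp add: power2_eq_square mult_ac)
qed

lemma continuous_on_inverse_family:
  fixes A R :: "'b::topological_space \<Rightarrow> 'a::real_normed_vector \<Rightarrow>\<^sub>L 'a"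
  assumes "continuous_on D A"
    and left: "\<And>w. w \<in> D \<Longrightarrow> R w o\<^sub>L A w = id_blinfun"
    and right: "\<And>w. w \<in> D \<Longrightarrow> A w o\<^sub>L R w = id_blinfun"
  shows "continuous_on D R"
  unfolding continuous_on_def
proof
  fix v
  assume "v \<in> D"
  have A: "((\<lambda>w. norm (A w - A v)) \<longlongrightarrow> 0) (at v within D)"
    using \<open>continuous_on D A\<close> \<open>v \<in> D\<close>
    by (simp add: continuous_on_def tendsto_norm_zero LIM_zero)
  then have "((\<lambda>w. norm (A w - A v) * norm (R v)) \<longlongrightarrow> 0) (at v within D)"
    by (rule tendsto_mult_left_zero)
  then have "eventually (\<lambda>w. norm (A w - A v) * norm (R v) < 1 / 2) (at v within D)"
    by (rule order_tendstoD(2)) simp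
  moreover have "eventually (\<lambda>w. w \<in> D) (at v within D)"
    by (simp add: eventually_at_filter)
  ultimately have "eventually (\<lambda>w. norm (R w - R v) \<le> 2 * (norm (R v))\<^sup>2 * norm (A w - A v))
      (at v within D)"
    by eventually_elim (simp add: norm_inverse_diff_le left right \<open>v \<in> D\<close>)
  moreover have "((\<lambda>w. 2 * (norm (R v))\<^sup>2 * norm (A w - A v)) \<longlongrightarrow> 0) (at v within D)"
    using A by (rule tendsto_mult_right_zero)
  ultimately have "((\<lambda>w. R w - R v) \<longlongrightarrow> 0) (at v within D)"
    by (rule Lim_null_comparison)
  then show "(R \<longlongrightarrow> R v) (at v within D)"
    by (simp add: LIM_zero_iff)
qed

primrec blinfun_pow :: "('a::real_normed_vector \<Rightarrow>\<^sub>L 'a) \<Rightarrow> nat \<Rightarrow> 'a \<Rightarrow>\<^sub>L 'a"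
    (infixr \<open>^\<^sub>L\<close> 80) where
  "A ^\<^sub>L 0 = id_blinfun"
| "A ^\<^sub>L Suc n = A o\<^sub>L A ^\<^sub>L n"

lemma blinfun_pow_apply_Suc': "(A ^\<^sub>L Suc n) x = (A ^\<^sub>L n) (A x)"
  by (induction n arbitrary: x) simp_all

lemma blinfun_pow_Suc': "A ^\<^sub>L Suc n = A ^\<^sub>L n o\<^sub>L A"
  by (rule blinfun_eqI) (simp only: blinfun_pow_apply_Suc' blinfun_apply_blinfun_compose)

lemma blinfun_pow_commute: "A o\<^sub>L A ^\<^sub>L n = A ^\<^sub>L n o\<^sub>L A"
  by (metis blinfun_pow.simps(2) blinfun_pow_Suc')

lemma blinfun_pow_add: "A ^\<^sub>L (m + n) = A ^\<^sub>L m o\<^sub>L A ^\<^sub>L n"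
  by (induction m) (simp_all add: blinfun_compose_assoc)

lemma norm_blinfun_pow_le: "norm (A ^\<^sub>L n) \<le> norm A ^ n"
proof (induction n)
  case 0
  show ?case by (simp add: norm_blinfun_id_le)
next
  case (Suc n)
  have "norm (A ^\<^sub>L Suc n) \<le> norm A * norm (A ^\<^sub>L n)"
    by (simp add: norm_blinfun_compose)
  also have "\<dots> \<le> norm A * norm A ^ n"
    using Suc by (simp add: mult_left_mono)
  finally show ?case by simp
qed

lemma summable_norm_blinfun_pow:
  "norm A < 1 \<Longrightarrow> summable (\<lambda>n. norm (A ^\<^sub>L n))"
  by (rule summable_comparison_test[OF _ summable_geometric[of "norm A"]])
    (use norm_blinfun_pow_le in auto)

lemma Neumann_series:
  fixes A :: "'a::banach \<Rightarrow>\<^sub>L 'a"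
  assumes "norm A < 1"
  shows "(id_blinfun - A) o\<^sub>L (\<Sum>n. A ^\<^sub>L n) = id_blinfun"
    and "(\<Sum>n. A ^\<^sub>L n) o\<^sub>L (id_blinfun - A) = id_blinfun"
proof -
  have sums: "summable (\<lambda>n. A ^\<^sub>L n)"
    using summable_norm_blinfun_pow[OF assms] by (rule summable_norm_cancel)
  have telescope: "(id_blinfun - A) o\<^sub>L (\<Sum>n<N. A ^\<^sub>L n) = id_blinfun - A ^\<^sub>L N" for N
    using sum_lessThan_telescope'[of "\<lambda>n. A ^\<^sub>L n" N]
    by (simp add: compose.diff_left compose.sum_right)
  have commute: "(\<Sum>n<N. A ^\<^sub>L n) o\<^sub>L (id_blinfun - A) = (id_blinfun - A) o\<^sub>L (\<Sum>n<N. A ^\<^sub>L n)"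
    for N
    by (simp add: compose.diff_left compose.diff_right compose.sum_left compose.sum_right
        blinfun_pow_commute sum_subtractf)
  have "(\<lambda>N. (id_blinfun - A) o\<^sub>L (\<Sum>n<N. A ^\<^sub>L n)) \<longlonglongrightarrow> id_blinfun - 0"
    unfolding telescope using sums by (intro tendsto_intros summable_LIMSEQ_zero)
  moreover have "(\<lambda>N. (id_blinfun - A) o\<^sub>L (\<Sum>n<N. A ^\<^sub>L n))
      \<longlonglongrightarrow> ((id_blinfun - A) o\<^sub>L (\<Sum>n. A ^\<^sub>L n))"
    using sums by (intro compose.tendsto tendsto_const summable_LIMSEQ)
  moreover have "(\<lambda>N. (id_blinfun - A) o\<^sub>L (\<Sum>n<N. A ^\<^sub>L n))
      \<longlonglongrightarrow> ((\<Sum>n. A ^\<^sub>L n) o\<^sub>L (id_blinfun - A))"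
    unfolding commute[symmetric] using sums by (intro compose.tendsto tendsto_const summable_LIMSEQ)
  ultimately show "(id_blinfun - A) o\<^sub>L (\<Sum>n. A ^\<^sub>L n) = id_blinfun"
    and "(\<Sum>n. A ^\<^sub>L n) o\<^sub>L (id_blinfun - A) = id_blinfun"
    by (metis LIMSEQ_unique diff_zero)+
qed

lemma bopD:
  fixes A :: "'a::complex_hilbert \<Rightarrow>\<^sub>L 'a"
  shows "A \<in> bop \<Longrightarrow> A (c *\<^sub>C x) = c *\<^sub>C A x"
  by (simp add: bop_def)

lemma bop_iff_commute_ii:
  fixes A :: "'a::complex_hilbert \<Rightarrow>\<^sub>L 'a"
  shows "A \<in> bop \<longleftrightarrow> (\<forall>x. A (\<i> *\<^sub>C x) = \<i> *\<^sub>C A x)"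
proof
  assume "A \<in> bop"
  then show "\<forall>x. A (\<i> *\<^sub>C x) = \<i> *\<^sub>C A x"
    by (simp add: bopD)
next
  assume ii: "\<forall>x. A (\<i> *\<^sub>C x) = \<i> *\<^sub>C A x"
  have "A (c *\<^sub>C x) = c *\<^sub>C A x" for c x
  proof -
    have "A (c *\<^sub>C x) = Re c *\<^sub>R A x + Im c *\<^sub>R A (\<i> *\<^sub>C x)"
      by (simp only: scaleC_Re_Im[of c x] blinfun.add_right blinfun.scaleR_right)
    also have "\<dots> = c *\<^sub>C A x"
      by (simp only: ii scaleC_Re_Im[of c "A x"])
    finally show ?thesis .
  qed
  then show "A \<in> bop"
    by (simp add: bop_def)
qed

lemma bopI:
  fixes A :: "'a::complex_hilbert \<Rightarrow>\<^sub>L 'a"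
  shows "(\<And>x. A (\<i> *\<^sub>C x) = \<i> *\<^sub>C A x) \<Longrightarrow> A \<in> bop"
  by (simp add: bop_iff_commute_ii)

lemma bop_id [simp]: "id_blinfun \<in> bop"
  by (rule bopI) simp

lemma bop_compose [simp]:
  fixes A B :: "'a::complex_hilbert \<Rightarrow>\<^sub>L 'a"
  shows "A \<in> bop \<Longrightarrow> B \<in> bop \<Longrightarrow> A o\<^sub>L B \<in> bop"
  by (rule bopI) (simp add: bopD)

lemma bop_add [simp]:
  fixes A B :: "'a::complex_hilbert \<Rightarrow>\<^sub>L 'a"
  shows "A \<in> bop \<Longrightarrow> B \<in> bop \<Longrightarrow> A + B \<in> bop"
  by (rule bopI) (simp add: bopD blinfun.add_left scaleC_add_right)

lemma bop_diff [simp]: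
  fixes A B :: "'a::complex_hilbert \<Rightarrow>\<^sub>L 'a"
  shows "A \<in> bop \<Longrightarrow> B \<in> bop \<Longrightarrow> A - B \<in> bop"
  by (rule bopI) (simp add: bopD blinfun.diff_left scaleC_diff_right)

lemma bop_scaleR [simp]:
  fixes A :: "'a::complex_hilbert \<Rightarrow>\<^sub>L 'a"
  shows "A \<in> bop \<Longrightarrow> r *\<^sub>R A \<in> bop"
  by (rule bopI) (simp add: bopD blinfun.scaleR_left scaleC_scaleR_commute)

lemma bop_blinfun_pow [simp]:
  fixes A :: "'a::complex_hilbert \<Rightarrow>\<^sub>L 'a"
  shows "A \<in> bop \<Longrightarrow> A ^\<^sub>L n \<in> bop"
  by (induction n) simp_all

lemma bop_suminf:
  fixes f :: "nat \<Rightarrow> 'a::complex_hilbert \<Rightarrow>\<^sub>L 'a"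
  assumes "summable f" and "\<And>n. f n \<in> bop"
  shows "suminf f \<in> bop"
proof (rule bopI)
  fix x
  have apply_sums: "(\<lambda>n. f n y) sums (suminf f) y" for y
    using bounded_linear.sums[OF blinfun.bounded_linear_left summable_sums[OF assms(1)]] .
  have "(\<lambda>n. \<i> *\<^sub>C f n x) sums (\<i> *\<^sub>C (suminf f) x)"
    using bounded_linear.sums[OF bounded_linear_scaleC apply_sums] .
  then have "(\<lambda>n. f n (\<i> *\<^sub>C x)) sums (\<i> *\<^sub>C (suminf f) x)"
    using assms(2) by (simp add: bopD)
  with apply_sums show "(suminf f) (\<i> *\<^sub>C x) = \<i> *\<^sub>C (suminf f) x"
    using sums_unique2 by blast
qed

section \<open>Riesz representation and adjoints\<close>

lemma Cauchy_of_near_minimal_norms: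
  fixes xs :: "nat \<Rightarrow> 'a::real_inner"
  assumes midpoint: "\<And>m n. d \<le> (norm ((1/2) *\<^sub>R (xs m + xs n)))\<^sup>2"
    and near: "\<And>n. (norm (xs n))\<^sup>2 \<le> d + 1 / Suc n"
  shows "Cauchy xs"
proof -
  have estimate: "(norm (xs m - xs n))\<^sup>2 \<le> 2 / Suc m + 2 / Suc n" for m n
  proof -
    have "(norm (xs m - xs n))\<^sup>2 = 2 * (norm (xs m))\<^sup>2 + 2 * (norm (xs n))\<^sup>2 - (norm (xs m + xs n))\<^sup>2"
      by (simp add: power2_norm_eq_inner inner_add_left inner_add_right inner_diff_left
          inner_diff_right inner_commute)
    moreover have "(norm (xs m + xs n))\<^sup>2 = 4 * (norm ((1/2) *\<^sub>R (xs m + xs n)))\<^sup>2"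
      by (simp add: power2_eq_square)
    ultimately show ?thesis
      using midpoint[of m n] near[of m] near[of n] by simp
  qed
  show "Cauchy xs"
  proof (rule CauchyI)
    fix e :: real
    assume "0 < e"
    obtain M :: nat where M: "4 / e\<^sup>2 < M"
      using reals_Archimedean2 by blast
    have "norm (xs m - xs n) < e" if "M \<le> m" "M \<le> n" for m n
    proof (rule power_less_imp_less_base)
      have "2 / real (Suc m) \<le> 2 / Suc M" "2 / real (Suc n) \<le> 2 / Suc M"
        using that by (auto simp: divide_simps)
      then have "(norm (xs m - xs n))\<^sup>2 \<le> 4 / Suc M"
        using estimate[of m n] by simp
      also have "\<dots> < e\<^sup>2"
      proof -
        have "4 < real M * e\<^sup>2"
          using M \<open>0 < e\<close> by (simp add: pos_divide_less_eq)
        also have "\<dots> \<le> real (Suc M) * e\<^sup>2"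
          by (intro mult_right_mono) auto
        finally have "4 < e\<^sup>2 * real (Suc M)"
          by (metis mult.commute)
        then show ?thesis
          by (simp add: pos_divide_less_eq)
      qed
      finally show "(norm (xs m - xs n))\<^sup>2 < e\<^sup>2" .
    qed (use \<open>0 < e\<close> in simp)
    then show "\<exists>M. \<forall>m\<ge>M. \<forall>n\<ge>M. norm (xs m - xs n) < e"
      by blast
  qed
qed

lemma exists_min_norm_in_level_set:
  fixes f :: "'a::{real_inner,complete_space} \<Rightarrow> real"
  assumes f: "bounded_linear f" and "f a = 1"
  shows "\<exists>z. f z = 1 \<and> (\<forall>x. f x = 1 \<longrightarrow> norm z \<le> norm x)"
proof -
  interpret f: bounded_linear f by (rule f)
  define d where "d = Inf ((\<lambda>x. (norm x)\<^sup>2) ` {x. f x = 1})"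
  have bdd: "bdd_below ((\<lambda>x. (norm x)\<^sup>2) ` {x. f x = 1})"
    by (rule bdd_belowI[of _ 0]) auto
  have d_le: "d \<le> (norm x)\<^sup>2" if "f x = 1" for x
    unfolding d_def using bdd that by (simp add: cInf_lower)
  have "\<exists>x. f x = 1 \<and> (norm x)\<^sup>2 < d + 1 / Suc n" for n
  proof -
    have "Inf ((\<lambda>x. (norm x)\<^sup>2) ` {x. f x = 1}) < d + 1 / Suc n"
      unfolding d_def by simp
    then obtain v where "v \<in> (\<lambda>x. (norm x)\<^sup>2) ` {x. f x = 1}" "v < d + 1 / Suc n"
      using cInf_lessD[of "(\<lambda>x. (norm x)\<^sup>2) ` {x. f x = 1}"] \<open>f a = 1\<close> by blast
    then show ?thesis
      by auto
  qed
  then obtain xs where xs: "\<And>n. f (xs n) = 1" "\<And>n. (norm (xs n))\<^sup>2 < d + 1 / Suc n"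
    by metis
  have "Cauchy xs"
  proof (rule Cauchy_of_near_minimal_norms)
    show "d \<le> (norm ((1/2) *\<^sub>R (xs m + xs n)))\<^sup>2" for m n
      using xs(1)[of m] xs(1)[of n] by (intro d_le) (simp add: f.scaleR f.add)
    show "(norm (xs n))\<^sup>2 \<le> d + 1 / Suc n" for n
      using xs(2)[of n] by simp
  qed
  then obtain z where lim: "xs \<longlonglongrightarrow> z"
    using Cauchy_convergent_iff convergent_def by blast
  have "(\<lambda>n. f (xs n)) \<longlonglongrightarrow> f z"
    by (rule f.tendsto[OF lim])
  moreover have "(\<lambda>n. f (xs n)) = (\<lambda>n. 1)"
    using xs(1) by simp
  ultimately have "f z = 1"
    using LIMSEQ_unique tendsto_const by metis
  moreover have "(norm z)\<^sup>2 \<le> d"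
  proof (rule tendsto_le[OF trivial_limit_sequentially])
    show "(\<lambda>n. (norm (xs n))\<^sup>2) \<longlonglongrightarrow> (norm z)\<^sup>2"
      by (intro tendsto_intros lim)
    show "(\<lambda>n. d + 1 / real (Suc n)) \<longlonglongrightarrow> d"
      using tendsto_add[OF tendsto_const LIMSEQ_Suc[OF lim_const_over_n], of d 1] by simp
    show "\<forall>\<^sub>F n in sequentially. (norm (xs n))\<^sup>2 \<le> d + 1 / real (Suc n)"
      using xs(2) less_imp_le by (intro always_eventually) blast
  qed
  ultimately show ?thesis
    using d_le order_trans power2_le_imp_le norm_ge_zero by metis
qed

lemma min_norm_in_level_set_orthogonal_kernel:
  fixes z :: "'a::real_inner"
  assumes f: "linear f" and "f z = 1" and min: "\<And>x. f x = 1 \<Longrightarrow> norm z \<le> norm x"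
    and "f k = 0"
  shows "inner z k = 0"
proof -
  define p K where "p = inner z k" and "K = (norm k)\<^sup>2"
  define t where "t = - p / (K + 1)"
  have "0 \<le> K"
    by (simp add: K_def)
  have "f (z + t *\<^sub>R k) = 1"
    using \<open>f z = 1\<close> \<open>f k = 0\<close> by (simp add: linear_add[OF f] linear_scale[OF f])
  then have "(norm z)\<^sup>2 \<le> (norm (z + t *\<^sub>R k))\<^sup>2"
    using min by (simp add: power_mono)
  also have "\<dots> = (norm z)\<^sup>2 + 2*t*p + t*t*K"
    by (simp add: power2_norm_eq_inner inner_add_left inner_add_right inner_commute p_def K_def
        algebra_simps)
  finally have "0 \<le> (2*t*p + t*t*K) * (K + 1)\<^sup>2"
    by simp
  also have "(2*t*p + t*t*K) * (K + 1)\<^sup>2 = 2*p*(t*(K + 1))*(K + 1) + K*(t*(K + 1))\<^sup>2"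
    by (simp add: power2_eq_square algebra_simps)
  also have "t * (K + 1) = - p"
    using \<open>0 \<le> K\<close> by (simp add: t_def)
  also have "2*p*(- p)*(K + 1) + K*(- p)\<^sup>2 = - p\<^sup>2 * (K + 2)"
    by (simp add: power2_eq_square algebra_simps)
  finally have "p\<^sup>2 \<le> 0"
    using \<open>0 \<le> K\<close> by (simp add: mult_le_0_iff)
  then show ?thesis
    by (simp add: p_def)
qed

theorem Riesz_representation:
  fixes f :: "'a::{real_inner,complete_space} \<Rightarrow> real"
  assumes f: "bounded_linear f"
  shows "\<exists>z. \<forall>x. f x = inner x z"
proof (cases "\<forall>x. f x = 0")
  case True
  then show ?thesis
    by (intro exI[of _ 0]) simp
next
  case False
  interpret f: bounded_linear f by (rule f)
  from False obtain a where "f a \<noteq> 0"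
    by blast
  then have "f ((1 / f a) *\<^sub>R a) = 1"
    by (simp add: f.scaleR)
  then obtain z where z: "f z = 1" "\<And>x. f x = 1 \<Longrightarrow> norm z \<le> norm x"
    using exists_min_norm_in_level_set[OF f] by blast
  have "f x = inner x ((1 / (norm z)\<^sup>2) *\<^sub>R z)" for x
  proof -
    have "f (x - f x *\<^sub>R z) = 0"
      using z(1) by (simp add: f.diff f.scaleR)
    then have "inner z (x - f x *\<^sub>R z) = 0"
      using min_norm_in_level_set_orthogonal_kernel[OF f.linear z] by blast
    moreover have "z \<noteq> 0"
      using z(1) by auto
    ultimately show ?thesis
      by (simp add: inner_diff_right inner_commute power2_norm_eq_inner)
  qed
  then show ?thesis
    by blast
qed

definition adjoint :: "('a::{real_inner,complete_space} \<Rightarrow>\<^sub>L 'a) \<Rightarrow> 'a \<Rightarrow>\<^sub>L 'a" where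
  "adjoint A = Blinfun (SOME g. \<forall>y x. inner (A x) y = inner x (g y))"

context
  fixes A :: "'a::{real_inner,complete_space} \<Rightarrow>\<^sub>L 'a"
begin

lemma ex_adjoint_fun: "\<exists>g. \<forall>y x. inner (A x) y = inner x (g y)"
proof (rule choice, rule allI)
  fix y
  have "bounded_linear (\<lambda>x. inner (A x) y)"
    by (rule bounded_linear_compose[OF bounded_linear_inner_left blinfun.bounded_linear_right])
  then show "\<exists>z. \<forall>x. inner (A x) y = inner x z"
    by (rule Riesz_representation)
qed

lemma bounded_linear_adjoint_fun:
  assumes g: "\<And>x y. inner (A x) y = inner x (g y)"
  shows "bounded_linear g"
proof (rule bounded_linear_intro[where K="norm A"])
  fix y1 y2
  show "g (y1 + y2) = g y1 + g y2"
    by (rule vector_eq_ldot[THEN iffD1]) (simp add: inner_add_right flip: g)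
next
  fix r y
  show "g (r *\<^sub>R y) = r *\<^sub>R g y"
    by (rule vector_eq_ldot[THEN iffD1]) (simp flip: g)
next
  fix y
  have "(norm (g y))\<^sup>2 = inner (A (g y)) y"
    by (simp add: g power2_norm_eq_inner)
  also have "\<dots> \<le> norm (A (g y)) * norm y"
    by (rule norm_cauchy_schwarz)
  also have "\<dots> \<le> norm A * norm (g y) * norm y"
    by (intro mult_right_mono norm_blinfun) simp
  finally show "norm (g y) \<le> norm y * norm A"
    by (cases "g y = 0") (auto simp: power2_eq_square mult.commute)
qed

lemma inner_adjoint_right: "inner x (adjoint A y) = inner (A x) y"
proof -
  define g where "g = (SOME g. \<forall>y x. inner (A x) y = inner x (g y))"
  have g: "\<forall>y x. inner (A x) y = inner x (g y)"
    unfolding g_def by (rule someI_ex[OF ex_adjoint_fun])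
  then have "adjoint A y = g y"
    unfolding adjoint_def g_def[symmetric]
    by (simp add: bounded_linear_Blinfun_apply[OF bounded_linear_adjoint_fun])
  with g show ?thesis
    by simp
qed

lemma inner_adjoint_left: "inner (adjoint A x) y = inner x (A y)"
  by (metis inner_adjoint_right inner_commute)

lemma norm_adjoint_le: "norm (adjoint A) \<le> norm A"
proof (rule norm_blinfun_bound)
  fix y
  have "(norm (adjoint A y))\<^sup>2 = inner (A (adjoint A y)) y"
    by (simp add: inner_adjoint_right power2_norm_eq_inner)
  also have "\<dots> \<le> norm (A (adjoint A y)) * norm y"
    by (rule norm_cauchy_schwarz)
  also have "\<dots> \<le> norm A * norm (adjoint A y) * norm y"
    by (intro mult_right_mono norm_blinfun) simp
  finally show "norm (adjoint A y) \<le> norm A * norm y"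
    by (cases "adjoint A y = 0") (auto simp: power2_eq_square)
qed simp

end

lemma bop_adjoint:
  fixes A :: "'a::complex_hilbert \<Rightarrow>\<^sub>L 'a"
  assumes "A \<in> bop"
  shows "adjoint A \<in> bop"
proof (rule bopI)
  fix y
  show "adjoint A (\<i> *\<^sub>C y) = \<i> *\<^sub>C adjoint A y"
  proof (rule vector_eq_ldot[THEN iffD1], rule allI)
    fix x
    have "inner x (adjoint A (\<i> *\<^sub>C y)) = - inner (\<i> *\<^sub>C A x) y"
      by (simp add: inner_adjoint_right inner_scaleC_ii_left)
    also have "\<dots> = - inner (\<i> *\<^sub>C x) (adjoint A y)"
      using assms by (simp add: bopD inner_adjoint_right)
    also have "\<dots> = inner x (\<i> *\<^sub>C adjoint A y)"
      by (simp add: inner_scaleC_ii_left)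
    finally show "inner x (adjoint A (\<i> *\<^sub>C y)) = inner x (\<i> *\<^sub>C adjoint A y)" .
  qed
qed

section \<open>Square roots of coercive selfadjoint operators\<close>

definition selfadjoint :: "('a::real_inner \<Rightarrow>\<^sub>L 'a) \<Rightarrow> bool" where
  "selfadjoint A \<longleftrightarrow> (\<forall>x y. inner (A x) y = inner x (A y))"

lemma selfadjointD: "selfadjoint A \<Longrightarrow> inner (A x) y = inner x (A y)"
  by (simp add: selfadjoint_def)

lemma selfadjoint_id [simp]: "selfadjoint id_blinfun"
  by (simp add: selfadjoint_def)

lemma selfadjoint_add: "selfadjoint A \<Longrightarrow> selfadjoint B \<Longrightarrow> selfadjoint (A + B)"
  by (simp add: selfadjoint_def blinfun.add_left inner_add_left inner_add_right)

lemma selfadjoint_diff: "selfadjoint A \<Longrightarrow> selfadjoint B \<Longrightarrow> selfadjoint (A - B)"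
  by (simp add: selfadjoint_def blinfun.diff_left inner_diff_left inner_diff_right)

lemma selfadjoint_scaleR: "selfadjoint A \<Longrightarrow> selfadjoint (r *\<^sub>R A)"
  by (simp add: selfadjoint_def blinfun.scaleR_left)

lemma selfadjoint_blinfun_pow: "selfadjoint A \<Longrightarrow> selfadjoint (A ^\<^sub>L n)"
proof (induction n)
  case (Suc n)
  then show ?case
    by (simp add: selfadjoint_def flip: blinfun_pow_apply_Suc')
qed simp

lemma selfadjoint_adjoint_compose: "selfadjoint (adjoint A o\<^sub>L A)"
  by (simp add: selfadjoint_def inner_adjoint_left inner_adjoint_right)

lemma selfadjoint_adjoint_compose_sym: "selfadjoint ((adjoint A o\<^sub>L B) + (adjoint B o\<^sub>L A))"
  by (simp add: selfadjoint_def blinfun.add_left inner_add_left inner_add_right inner_adjoint_left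
      inner_adjoint_right)

lemma sums_inner_blinfun_apply:
  fixes f :: "nat \<Rightarrow> 'a::real_inner \<Rightarrow>\<^sub>L 'a"
  assumes "summable f"
  shows "(\<lambda>n. inner (f n x) y) sums inner (suminf f x) y"
proof -
  have "bounded_linear (\<lambda>A. inner (blinfun_apply A x) y)"
    by (rule bounded_linear_compose[OF bounded_linear_inner_left blinfun.bounded_linear_left])
  from bounded_linear.sums[OF this summable_sums[OF assms]] show ?thesis .
qed

lemma selfadjoint_suminf:
  fixes f :: "nat \<Rightarrow> 'a::real_inner \<Rightarrow>\<^sub>L 'a"
  assumes "summable f" and "\<And>n. selfadjoint (f n)"
  shows "selfadjoint (suminf f)"
  unfolding selfadjoint_def
proof (intro allI)
  fix x y
  have "(\<lambda>n. inner (f n y) x) sums inner (suminf f y) x"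
    by (rule sums_inner_blinfun_apply[OF assms(1)])
  moreover have "inner (f n y) x = inner (f n x) y" for n
    using selfadjointD[OF assms(2)[of n], of y x] by (simp add: inner_commute)
  ultimately have "(\<lambda>n. inner (f n x) y) sums inner (suminf f y) x"
    by simp
  then have "inner (suminf f x) y = inner (suminf f y) x"
    using sums_inner_blinfun_apply[OF assms(1)] sums_unique2 by blast
  then show "inner (suminf f x) y = inner x (suminf f y)"
    by (simp add: inner_commute)
qed

lemma norm_selfadjoint_le:
  fixes Z :: "'a::real_inner \<Rightarrow>\<^sub>L 'a"
  assumes "selfadjoint Z" and "0 \<le> q" and form: "\<And>x. \<bar>inner (Z x) x\<bar> \<le> q * (norm x)\<^sup>2"
  shows "norm Z \<le> q"
proof (rule norm_blinfun_bound[OF \<open>0 \<le> q\<close>])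
  fix x
  show "norm (Z x) \<le> q * norm x"
  proof (cases "Z x = 0")
    case True
    then show ?thesis
      using \<open>0 \<le> q\<close> by simp
  next
    case False
    define y where "y = (norm x / norm (Z x)) *\<^sub>R Z x"
    have "norm y = norm x"
      using False by (simp add: y_def)
    have "inner (Z (x + y)) (x + y) - inner (Z (x - y)) (x - y) = 4 * inner (Z x) y"
      using selfadjointD[OF assms(1), of y x]
      by (simp add: blinfun.add_right blinfun.diff_right inner_add_left inner_add_right
          inner_diff_left inner_diff_right inner_commute[of y "Z x"])
    also have "\<dots> = 4 * (norm x * norm (Z x))"
      using False by (simp add: y_def power2_norm_eq_inner[symmetric] power2_eq_square)
    finally have "4 * (norm x * norm (Z x)) \<le> q * ((norm (x + y))\<^sup>2 + (norm (x - y))\<^sup>2)"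
      using form[of "x + y"] form[of "x - y"] by (simp add: abs_le_iff algebra_simps)
    also have "(norm (x + y))\<^sup>2 + (norm (x - y))\<^sup>2 = 2 * (norm x)\<^sup>2 + 2 * (norm y)\<^sup>2"
      by (simp add: power2_norm_eq_inner inner_add_left inner_add_right inner_diff_left
          inner_diff_right inner_commute)
    also have "\<dots> = 4 * (norm x)\<^sup>2"
      using \<open>norm y = norm x\<close> by simp
    finally have "norm x * norm (Z x) \<le> norm x * (q * norm x)"
      by (simp add: power2_eq_square algebra_simps)
    moreover have "norm x \<noteq> 0"
      using False by auto
    ultimately show ?thesis
      by (simp add: mult_le_cancel_left)
  qed
qed

lemma abs_gbinomial_half_le_1: "\<bar>(1/2::real) gchoose k\<bar> \<le> 1"
proof (induction k)
  case (Suc k)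
  have "(1/2::real) * ((1/2) gchoose k) = real k * ((1/2) gchoose k) + real (Suc k) * ((1/2) gchoose (Suc k))"
    by (rule gbinomial_mult_1)
  then have recurrence: "(1/2::real) gchoose (Suc k) = (1/2 - real k) / real (Suc k) * ((1/2) gchoose k)"
    by (simp add: field_simps)
  have "\<bar>(1/2 - real k) / real (Suc k)\<bar> \<le> 1"
    by (simp add: divide_simps abs_if)
  then have "\<bar>(1/2 - real k) / real (Suc k)\<bar> * \<bar>(1/2::real) gchoose k\<bar> \<le> 1 * 1"
    using Suc by (intro mult_mono) auto
  then show ?case
    by (simp add: recurrence abs_mult)
qed simp

lemma binomial_half_convolution:
  "(\<Sum>i\<le>k. ((-1)^i * ((1/2::real) gchoose i)) * ((-1)^(k - i) * ((1/2) gchoose (k - i))))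
     = (if k = 0 then 1 else if k = 1 then -1 else 0)"
proof -
  have "(\<Sum>i\<le>k. ((-1)^i * ((1/2::real) gchoose i)) * ((-1)^(k - i) * ((1/2) gchoose (k - i))))
      = (-1)^k * (\<Sum>i\<in>{0..k}. ((1/2::real) gchoose i) * ((1/2) gchoose (k - i)))"
    unfolding sum_distrib_left atLeast0AtMost
    by (intro sum.cong refl) (simp add: power_add[symmetric])
  also have "\<dots> = (-1)^k * real (1 choose k)"
    by (simp add: gbinomial_Vandermonde binomial_gbinomial)
  also have "\<dots> = (if k = 0 then 1 else if k = 1 then -1 else 0)"
    by (cases k) (auto simp: binomial_eq_0)
  finally show ?thesis .
qed

lemma sum_products_off_triangle_tendsto_0:
  fixes p q :: "nat \<Rightarrow> real"
  assumes "\<And>k. 0 \<le> p k" and "\<And>k. 0 \<le> q k" and "summable p" and "summable q"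
  shows "(\<lambda>n. \<Sum>(i,j)\<in>{..<n} \<times> {..<n} - {(i,j). i + j < n}. p i * q j) \<longlonglongrightarrow> 0"
proof -
  let ?S1 = "\<lambda>n::nat. {..<n} \<times> {..<n}"
  let ?S2 = "\<lambda>n::nat. {(i,j). i + j < n}"
  let ?f = "\<lambda>(i,j). p i * q j"
  have f_nonneg: "0 \<le> ?f x" for x
    using assms(1,2) by (auto simp: case_prod_unfold)
  have "(\<lambda>n. (\<Sum>k<n. p k) * (\<Sum>k<n. q k)) \<longlonglongrightarrow> (\<Sum>k. p k) * (\<Sum>k. q k)"
    using assms(3,4) by (intro tendsto_mult summable_LIMSEQ)
  then have "(\<lambda>n. sum ?f (?S1 n)) \<longlonglongrightarrow> (\<Sum>k. p k) * (\<Sum>k. q k)"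
    by (simp only: sum_product sum.Sigma [rule_format] finite_lessThan)
  then have Cauchy: "Cauchy (\<lambda>n. sum ?f (?S1 n))"
    by (rule convergent_Cauchy[OF convergentI])
  show ?thesis
  proof (rule LIMSEQ_I)
    fix r :: real
    assume "0 < r"
    from CauchyD[OF Cauchy this] obtain N
      where N: "\<forall>m\<ge>N. \<forall>n\<ge>N. norm (sum ?f (?S1 m) - sum ?f (?S1 n)) < r" ..
    have N: "sum ?f (?S1 m - ?S1 n) < r" if "N \<le> n" "n \<le> m" for m n
    proof -
      have "sum ?f (?S1 m - ?S1 n) = sum ?f (?S1 m) - sum ?f (?S1 n)"
        using that by (intro sum_diff) auto
      also have "\<dots> < r"
        using N[rule_format, of m n] that by simp
      finally show ?thesis .
    qed
    have "norm (sum ?f (?S1 n - ?S2 n) - 0) < r" if "2 * N \<le> n" for n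
    proof -
      have "sum ?f (?S1 n - ?S2 n) \<le> sum ?f (?S1 n - ?S1 (n div 2))"
        by (intro sum_mono2 f_nonneg) auto
      also have "\<dots> < r"
        using that by (intro N) auto
      finally show ?thesis
        using sum_nonneg[of _ ?f, OF f_nonneg] by simp
    qed
    then show "\<exists>N. \<forall>n\<ge>N. norm (sum ?f (?S1 n - ?S2 n) - 0) < r"
      by blast
  qed
qed

lemma bounded_bilinear_Cauchy_product_sums:
  fixes prod :: "'a::banach \<Rightarrow> 'b::banach \<Rightarrow> 'c::real_normed_vector"
    and a :: "nat \<Rightarrow> 'a" and b :: "nat \<Rightarrow> 'b"
  assumes "bounded_bilinear prod"
    and a: "summable (\<lambda>k. norm (a k))" and b: "summable (\<lambda>k. norm (b k))"
  shows "(\<lambda>k. \<Sum>i\<le>k. prod (a i) (b (k - i))) sums prod (\<Sum>k. a k) (\<Sum>k. b k)"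
proof -
  interpret bounded_bilinear prod by fact
  obtain K where K: "\<And>x y. norm (prod x y) \<le> norm x * norm y * K"
    using bounded by blast
  let ?S1 = "\<lambda>n::nat. {..<n} \<times> {..<n}"
  let ?S2 = "\<lambda>n::nat. {(i,j). i + j < n}"
  let ?g = "\<lambda>(i,j). prod (a i) (b j)"
  have "prod (\<Sum>k<n. a k) (\<Sum>k<n. b k) = sum ?g (?S1 n)" for n
    unfolding sum_left by (simp only: sum_right sum.cartesian_product)
  moreover have "(\<lambda>n. prod (\<Sum>k<n. a k) (\<Sum>k<n. b k)) \<longlonglongrightarrow> prod (\<Sum>k. a k) (\<Sum>k. b k)"
    by (intro tendsto summable_LIMSEQ summable_norm_cancel[OF a] summable_norm_cancel[OF b])
  ultimately have square: "(\<lambda>n. sum ?g (?S1 n)) \<longlonglongrightarrow> prod (\<Sum>k. a k) (\<Sum>k. b k)"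
    by simp
  have bound: "norm (sum ?g A) \<le> (\<Sum>(i,j)\<in>A. norm (a i) * norm (b j)) * K" for A
  proof -
    have "norm (sum ?g A) \<le> (\<Sum>(i,j)\<in>A. norm (a i) * norm (b j) * K)"
      by (rule order_trans[OF norm_sum sum_mono]) (auto simp: K)
    then show ?thesis
      by (simp add: sum_distrib_right case_prod_unfold)
  qed
  have "(\<lambda>n. (\<Sum>(i,j)\<in>?S1 n - ?S2 n. norm (a i) * norm (b j)) * K) \<longlonglongrightarrow> 0"
    using tendsto_mult_right[OF sum_products_off_triangle_tendsto_0[OF _ _ a b], of K] by simp
  then have "(\<lambda>n. sum ?g (?S1 n - ?S2 n)) \<longlonglongrightarrow> 0"
    by (rule Lim_null_comparison[OF always_eventually, rotated]) (simp add: bound)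
  then have "(\<lambda>n. sum ?g (?S1 n) - sum ?g (?S2 n)) \<longlonglongrightarrow> 0"
    by (simp add: sum_diff subset_eq)
  with square have "(\<lambda>n. sum ?g (?S2 n)) \<longlonglongrightarrow> prod (\<Sum>k. a k) (\<Sum>k. b k)"
    by (rule Lim_transform2)
  then show ?thesis
    by (simp only: sums_def sum.triangle_reindex)
qed

lemma binomial_half_series_square_coeff:
  fixes Z :: "'a::real_normed_vector \<Rightarrow>\<^sub>L 'a"
  defines "u \<equiv> \<lambda>k. ((-1)^k * ((1/2::real) gchoose k)) *\<^sub>R Z ^\<^sub>L k"
  shows "(\<Sum>i\<le>k. u i o\<^sub>L u (k - i)) = (if k = 0 then 1 else if k = 1 then -1 else 0) *\<^sub>R Z ^\<^sub>L k"
proof -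
  define c where "c k = (-1)^k * ((1/2::real) gchoose k)" for k
  have "(\<Sum>i\<le>k. u i o\<^sub>L u (k - i)) = (\<Sum>i\<le>k. (c i * c (k - i)) *\<^sub>R Z ^\<^sub>L k)"
  proof (rule sum.cong)
    fix i
    assume "i \<in> {..k}"
    then have "Z ^\<^sub>L i o\<^sub>L Z ^\<^sub>L (k - i) = Z ^\<^sub>L k"
      by (simp flip: blinfun_pow_add)
    then show "u i o\<^sub>L u (k - i) = (c i * c (k - i)) *\<^sub>R Z ^\<^sub>L k"
      by (simp add: u_def c_def compose.scaleR_left compose.scaleR_right)
  qed simp
  also have "\<dots> = (\<Sum>i\<le>k. c i * c (k - i)) *\<^sub>R Z ^\<^sub>L k"
    by (rule scaleR_sum_left[symmetric])
  also have "\<dots> = (if k = 0 then 1 else if k = 1 then -1 else 0) *\<^sub>R Z ^\<^sub>L k"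
    unfolding c_def by (simp only: binomial_half_convolution)
  finally show ?thesis .
qed

lemma binomial_series_sqrt:
  fixes Z :: "'a::complex_hilbert \<Rightarrow>\<^sub>L 'a"
  assumes "Z \<in> bop" and "selfadjoint Z" and "norm Z < 1"
  shows "\<exists>S. S \<in> bop \<and> selfadjoint S \<and> S o\<^sub>L S = id_blinfun - Z"
proof -
  define u where "u k = ((-1)^k * ((1/2::real) gchoose k)) *\<^sub>R Z ^\<^sub>L k" for k
  have "norm (u k) \<le> norm Z ^ k" for k
  proof -
    have "norm (u k) = \<bar>(1/2::real) gchoose k\<bar> * norm (Z ^\<^sub>L k)"
      by (simp add: u_def abs_mult)
    also have "\<dots> \<le> 1 * norm Z ^ k"
      using abs_gbinomial_half_le_1[of k] norm_blinfun_pow_le[of Z k] by (intro mult_mono) auto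
    finally show ?thesis
      by simp
  qed
  then have summable_u: "summable (\<lambda>k. norm (u k))"
    using \<open>norm Z < 1\<close>
    by (intro summable_comparison_test[OF _ summable_geometric[of "norm Z"]]) auto
  define S where "S = (\<Sum>k. u k)"
  have "S \<in> bop"
    unfolding S_def using \<open>Z \<in> bop\<close>
    by (intro bop_suminf summable_norm_cancel[OF summable_u]) (simp add: u_def)
  moreover have "selfadjoint S"
    unfolding S_def using \<open>selfadjoint Z\<close>
    by (intro selfadjoint_suminf summable_norm_cancel[OF summable_u])
      (simp add: u_def selfadjoint_scaleR selfadjoint_blinfun_pow)
  moreover have "S o\<^sub>L S = id_blinfun - Z"
  proof -
    define e :: "nat \<Rightarrow> real" where "e k = (if k = 0 then 1 else if k = 1 then -1 else 0)" for k
    have "(\<lambda>k. \<Sum>i\<le>k. u i o\<^sub>L u (k - i)) sums (S o\<^sub>L S)"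
      unfolding S_def
      by (rule bounded_bilinear_Cauchy_product_sums[OF compose.bounded_bilinear_axioms
            summable_u summable_u])
    then have "(\<lambda>k. e k *\<^sub>R Z ^\<^sub>L k) sums (S o\<^sub>L S)"
      by (simp add: u_def e_def binomial_half_series_square_coeff)
    moreover have "(\<lambda>k. e k *\<^sub>R Z ^\<^sub>L k) sums (\<Sum>k\<in>{0,1}. e k *\<^sub>R Z ^\<^sub>L k)"
      by (rule sums_finite) (auto simp: e_def)
    ultimately show ?thesis
      using sums_unique2 by (force simp: e_def)
  qed
  ultimately show ?thesis
    by blast
qed

lemma norm_id_minus_scaleR_coercive_less_1:
  fixes G :: "'a::real_inner \<Rightarrow>\<^sub>L 'a"
  assumes "selfadjoint G" and "0 < a" and coercive: "\<And>x. a * (norm x)\<^sup>2 \<le> inner (G x) x"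
  shows "norm (id_blinfun - (1 / (norm G + a)) *\<^sub>R G) < 1"
proof -
  define c where "c = norm G + a"
  have "0 < c"
    using \<open>0 < a\<close> norm_ge_zero[of G] unfolding c_def by linarith
  have "\<bar>inner ((id_blinfun - (1/c) *\<^sub>R G) x) x\<bar> \<le> (1 - a / c) * (norm x)\<^sup>2" for x
  proof -
    have "inner (G x) x \<le> norm (G x) * norm x"
      by (rule norm_cauchy_schwarz)
    also have "\<dots> \<le> norm G * norm x * norm x"
      by (intro mult_right_mono norm_blinfun) simp
    finally have "inner (G x) x / c \<le> (norm G / c) * (norm x)\<^sup>2"
      using \<open>0 < c\<close> by (simp add: power2_eq_square divide_right_mono mult.assoc)
    also have "norm G / c = 1 - a / c"
      using \<open>0 < c\<close> by (simp add: c_def field_simps)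
    finally have "inner (G x) x / c \<le> (1 - a / c) * (norm x)\<^sup>2" .
    moreover have "(a / c) * (norm x)\<^sup>2 \<le> inner (G x) x / c"
      using coercive[of x] \<open>0 < c\<close> by (simp add: divide_right_mono)
    moreover have "0 \<le> (a / c) * (norm x)\<^sup>2"
      using \<open>0 < a\<close> \<open>0 < c\<close> by simp
    moreover have "inner ((id_blinfun - (1/c) *\<^sub>R G) x) x = (norm x)\<^sup>2 - inner (G x) x / c"
      by (simp add: blinfun.diff_left blinfun.scaleR_left inner_diff_left power2_norm_eq_inner)
    ultimately show ?thesis
      by (simp add: abs_le_iff algebra_simps)
  qed
  moreover have "a / c \<le> 1"
    using \<open>0 < c\<close> norm_ge_zero[of G] by (simp add: c_def)
  ultimately have "norm (id_blinfun - (1/c) *\<^sub>R G) \<le> 1 - a / c"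
    using \<open>selfadjoint G\<close>
    by (intro norm_selfadjoint_le selfadjoint_diff selfadjoint_id selfadjoint_scaleR) simp_all
  also have "\<dots> < 1"
    using \<open>0 < a\<close> \<open>0 < c\<close> by simp
  finally show ?thesis
    by (simp add: c_def)
qed

lemma blinfun_inverse_of_square_inverse:
  fixes S N :: "'a::real_normed_vector \<Rightarrow>\<^sub>L 'a"
  assumes "(S o\<^sub>L S) o\<^sub>L N = id_blinfun" and "N o\<^sub>L (S o\<^sub>L S) = id_blinfun"
  shows "S o\<^sub>L (S o\<^sub>L N) = id_blinfun" and "(S o\<^sub>L N) o\<^sub>L S = id_blinfun"
proof -
  show right: "S o\<^sub>L (S o\<^sub>L N) = id_blinfun"
    using assms(1) by (simp add: blinfun_compose_assoc)
  have left: "(N o\<^sub>L S) o\<^sub>L S = id_blinfun"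
    using assms(2) by (simp add: blinfun_compose_assoc)
  have "N o\<^sub>L S = (N o\<^sub>L S) o\<^sub>L (S o\<^sub>L (S o\<^sub>L N))"
    using right by simp
  also have "\<dots> = ((N o\<^sub>L S) o\<^sub>L S) o\<^sub>L (S o\<^sub>L N)"
    by (simp add: blinfun_compose_assoc)
  also have "\<dots> = S o\<^sub>L N"
    using left by simp
  finally show "(S o\<^sub>L N) o\<^sub>L S = id_blinfun"
    using left by simp
qed

lemma sqrt_coercive_selfadjoint:
  fixes G :: "'a::complex_hilbert \<Rightarrow>\<^sub>L 'a"
  assumes "G \<in> bop" and "selfadjoint G" and "0 < a"
    and coercive: "\<And>x. a * (norm x)\<^sup>2 \<le> inner (G x) x"
  shows "\<exists>W V. W \<in> bop \<and> V \<in> bop \<and> W o\<^sub>L V = id_blinfun \<and> V o\<^sub>L W = id_blinfun \<and>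
           (\<forall>x. (norm (W x))\<^sup>2 = inner (G x) x)"
proof -
  define c where "c = norm G + a"
  have "0 < c"
    using \<open>0 < a\<close> norm_ge_zero[of G] unfolding c_def by linarith
  define Z where "Z = id_blinfun - (1/c) *\<^sub>R G"
  have "norm Z < 1"
    unfolding Z_def c_def using assms(2-4) by (rule norm_id_minus_scaleR_coercive_less_1)
  have "Z \<in> bop" "selfadjoint Z"
    using \<open>G \<in> bop\<close> \<open>selfadjoint G\<close> by (simp_all add: Z_def selfadjoint_diff selfadjoint_scaleR)
  then obtain S where "S \<in> bop" "selfadjoint S" and S: "S o\<^sub>L S = id_blinfun - Z"
    using binomial_series_sqrt \<open>norm Z < 1\<close> by blast
  define N where "N = (\<Sum>n. Z ^\<^sub>L n)"
  have "N \<in> bop"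
    unfolding N_def using \<open>Z \<in> bop\<close>
    by (intro bop_suminf summable_norm_cancel[OF summable_norm_blinfun_pow[OF \<open>norm Z < 1\<close>]]) simp
  have "(S o\<^sub>L S) o\<^sub>L N = id_blinfun" "N o\<^sub>L (S o\<^sub>L S) = id_blinfun"
    using Neumann_series[OF \<open>norm Z < 1\<close>] by (simp_all add: S N_def)
  note inverse = blinfun_inverse_of_square_inverse[OF this]
  define W where "W = sqrt c *\<^sub>R S"
  define V where "V = (1 / sqrt c) *\<^sub>R (S o\<^sub>L N)"
  have "W o\<^sub>L V = id_blinfun" "V o\<^sub>L W = id_blinfun"
    using \<open>0 < c\<close> inverse by (simp_all add: W_def V_def compose.scaleR_left compose.scaleR_right)
  moreover have "(norm (W x))\<^sup>2 = inner (G x) x" for x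
  proof -
    have "(norm (W x))\<^sup>2 = c * inner (S x) (S x)"
      using \<open>0 < c\<close> by (simp add: W_def blinfun.scaleR_left power_mult_distrib dot_square_norm)
    also have "\<dots> = c * inner ((S o\<^sub>L S) x) x"
      using \<open>selfadjoint S\<close> by (simp add: selfadjointD inner_commute)
    also have "\<dots> = inner (G x) x"
      using \<open>0 < c\<close> by (simp add: S Z_def blinfun.diff_left blinfun.scaleR_left inner_diff_left)
    finally show ?thesis .
  qed
  ultimately show ?thesis
    using \<open>S \<in> bop\<close> \<open>N \<in> bop\<close> by (intro exI[of _ W] exI[of _ V]) (simp add: W_def V_def)
qed

lemma similar_to_contraction_if_Lyapunov:
  fixes T G :: "'a::complex_hilbert \<Rightarrow>\<^sub>L 'a"
  assumes "G \<in> bop" and "selfadjoint G" and "0 < a"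
    and "\<And>x. a * (norm x)\<^sup>2 \<le> inner (G x) x"
    and decreasing: "\<And>x. inner (G (T x)) (T x) \<le> inner (G x) x"
  shows "similar_to_contraction T"
proof -
  obtain W V where "W \<in> bop" "V \<in> bop" and WV: "W o\<^sub>L V = id_blinfun" "V o\<^sub>L W = id_blinfun"
    and W: "\<And>x. (norm (W x))\<^sup>2 = inner (G x) x"
    using sqrt_coercive_selfadjoint[OF assms(1-4)] by blast
  have "norm (W o\<^sub>L T o\<^sub>L V) \<le> 1"
  proof (rule norm_blinfun_bound)
    fix y
    have "W (V y) = y"
      using WV(1) by (metis blinfun_apply_blinfun_compose blinfun_apply_id_blinfun)
    then have "(norm ((W o\<^sub>L T o\<^sub>L V) y))\<^sup>2 \<le> (norm y)\<^sup>2"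
      using decreasing[of "V y"] W[of "V y"] by (simp add: W)
    then have "norm ((W o\<^sub>L T o\<^sub>L V) y) \<le> norm y"
      by (rule power2_le_imp_le) simp
    then show "norm ((W o\<^sub>L T o\<^sub>L V) y) \<le> 1 * norm y"
      by simp
  qed simp
  then show ?thesis
    unfolding similar_to_contraction_def invertible_bop_def
    using \<open>W \<in> bop\<close> \<open>V \<in> bop\<close> WV by blast
qed

section \<open>Spectral radius and geometric decay of powers\<close>

definition scaleC_op :: "complex \<Rightarrow> 'a::complex_hilbert \<Rightarrow>\<^sub>L 'a" where
  "scaleC_op c = Blinfun (\<lambda>x. c *\<^sub>C x)"

lemma scaleC_op_apply [simp]: "scaleC_op c x = c *\<^sub>C x"
  unfolding scaleC_op_def by (simp add: bounded_linear_Blinfun_apply[OF bounded_linear_scaleC])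

lemma bop_scaleC_op [simp]: "scaleC_op c \<in> bop"
  by (simp add: bop_def scaleC_scaleC mult.commute)

lemma scaleC_op_0 [simp]: "scaleC_op 0 = 0"
  by (rule blinfun_eqI) simp

lemma scaleC_op_1 [simp]: "scaleC_op 1 = id_blinfun"
  by (rule blinfun_eqI) simp

lemma scaleC_op_mult: "scaleC_op c o\<^sub>L scaleC_op d = scaleC_op (c * d)"
  by (rule blinfun_eqI) (simp add: scaleC_scaleC)

lemma norm_scaleC_op_compose_le:
  "norm (scaleC_op c o\<^sub>L A) \<le> cmod c * norm (A::'a::complex_hilbert \<Rightarrow>\<^sub>L 'a)"
  by (rule norm_blinfun_bound) (simp_all add: norm_scaleC norm_blinfun mult_left_mono mult.assoc)

lemma blinfun_pow_scaleC_op_compose: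
  assumes "A \<in> bop"
  shows "(scaleC_op w o\<^sub>L A) ^\<^sub>L n = scaleC_op (w ^ n) o\<^sub>L A ^\<^sub>L n"
proof -
  have "((scaleC_op w o\<^sub>L A) ^\<^sub>L n) x = w ^ n *\<^sub>C (A ^\<^sub>L n) x" for x
    by (induction n arbitrary: x) (simp_all add: bopD[OF assms] bopD[OF bop_blinfun_pow[OF assms]]
        scaleC_scaleC blinfun_pow_apply_Suc')
  then show ?thesis
    by (intro blinfun_eqI) simp
qed

definition bop_inverse :: "('a::complex_hilbert \<Rightarrow>\<^sub>L 'a) \<Rightarrow> ('a \<Rightarrow>\<^sub>L 'a) \<Rightarrow> bool" where
  "bop_inverse R X \<longleftrightarrow> R \<in> bop \<and> R o\<^sub>L X = id_blinfun \<and> X o\<^sub>L R = id_blinfun"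

lemma bop_inverse_unique: "bop_inverse R X \<Longrightarrow> S o\<^sub>L X = id_blinfun \<Longrightarrow> S = R"
  unfolding bop_inverse_def by (metis blinfun_compose_assoc blinfun_compose_id)

lemma bop_inverse_scaleC_op_compose:
  assumes "bop_inverse R X" and "c \<noteq> 0"
  shows "bop_inverse (R o\<^sub>L scaleC_op (1 / c)) (scaleC_op c o\<^sub>L X)"
  using assms unfolding bop_inverse_def
  by (simp add: blinfun_compose_assoc scaleC_op_mult)
    (simp flip: blinfun_compose_assoc add: scaleC_op_mult)

lemma Neumann_series_bop_inverse:
  fixes A :: "'a::complex_hilbert \<Rightarrow>\<^sub>L 'a"
  assumes "A \<in> bop" and "norm A < 1"
  shows "bop_inverse (\<Sum>n. A ^\<^sub>L n) (id_blinfun - A)"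
  unfolding bop_inverse_def using Neumann_series[OF assms(2)] assms
  by (simp add: bop_suminf summable_norm_cancel[OF summable_norm_blinfun_pow])

lemma not_in_bop_spectrum_iff:
  "z \<notin> bop_spectrum E \<longleftrightarrow> (\<exists>R. bop_inverse R (E - scaleC_op z))"
  by (auto simp: bop_spectrum_def bop_inverse_def blinfun_compose_eq_id_iff blinfun.diff_left)

text \<open>The resolvent is parametrized as \<open>(id - w E)\<^sup>-\<^sup>1\<close> rather than \<open>(E - z)\<^sup>-\<^sup>1\<close>, \<open>w = 1/z\<close>,
  so that it is defined and holomorphic on a whole disc around \<open>w = 0\<close>.\<close>

lemma id_minus_scaleC_op_compose_eq:
  assumes "w \<noteq> 0"
  shows "id_blinfun - (scaleC_op w o\<^sub>L E) = scaleC_op (- w) o\<^sub>L (E - scaleC_op (1 / w))"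
  using assms
  by (intro blinfun_eqI) (simp add: blinfun.diff_left scaleC_diff_right scaleC_minus_left scaleC_scaleC)

lemma diff_scaleC_op_eq:
  assumes "z \<noteq> 0"
  shows "E - scaleC_op z = scaleC_op (- z) o\<^sub>L (id_blinfun - (scaleC_op (1 / z) o\<^sub>L E))"
  using assms
  by (intro blinfun_eqI) (simp add: blinfun.diff_left scaleC_diff_right scaleC_minus_left scaleC_scaleC)

lemma norm_le_if_in_bop_spectrum:
  assumes "E \<in> bop" and "z \<in> bop_spectrum E"
  shows "cmod z \<le> norm E"
proof (rule ccontr)
  assume "\<not> cmod z \<le> norm E"
  then have "norm E < cmod z" and "z \<noteq> 0"
    by auto
  have "norm (scaleC_op (1 / z) o\<^sub>L E) \<le> cmod (1 / z) * norm E"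
    by (rule norm_scaleC_op_compose_le)
  also have "\<dots> < 1"
    using \<open>norm E < cmod z\<close> \<open>z \<noteq> 0\<close> by (simp add: norm_divide field_simps)
  finally have "bop_inverse (\<Sum>n. (scaleC_op (1 / z) o\<^sub>L E) ^\<^sub>L n) (id_blinfun - (scaleC_op (1 / z) o\<^sub>L E))"
    using \<open>E \<in> bop\<close> by (intro Neumann_series_bop_inverse) simp_all
  then have "bop_inverse ((\<Sum>n. (scaleC_op (1 / z) o\<^sub>L E) ^\<^sub>L n) o\<^sub>L scaleC_op (1 / - z))
      (E - scaleC_op z)"
    unfolding diff_scaleC_op_eq[OF \<open>z \<noteq> 0\<close>]
    using \<open>z \<noteq> 0\<close> by (intro bop_inverse_scaleC_op_compose) simp_all
  then show False
    using \<open>z \<in> bop_spectrum E\<close> not_in_bop_spectrum_iff by blast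
qed

lemma continuous_on_resolvent:
  fixes E :: "'a::complex_hilbert \<Rightarrow>\<^sub>L 'a"
  assumes "\<And>w. w \<in> D \<Longrightarrow> bop_inverse (R w) (id_blinfun - (scaleC_op w o\<^sub>L E))"
  shows "continuous_on D R"
proof (rule continuous_on_inverse_family)
  define Ei where "Ei = scaleC_op \<i> o\<^sub>L E"
  have "scaleC_op w o\<^sub>L E = Re w *\<^sub>R E + Im w *\<^sub>R Ei" for w
  proof (rule blinfun_eqI)
    fix x
    show "(scaleC_op w o\<^sub>L E) x = (Re w *\<^sub>R E + Im w *\<^sub>R Ei) x"
      by (simp add: Ei_def scaleC_Re_Im[of w "E x"] blinfun.add_left blinfun.scaleR_left)
  qed
  then show "continuous_on D (\<lambda>w. id_blinfun - (scaleC_op w o\<^sub>L E))"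
    by (simp only:) (intro continuous_intros)
qed (use assms in \<open>auto simp: bop_inverse_def\<close>)

text \<open>The complex inner product, linear in the first argument, recovered from its real part.\<close>

definition cinner :: "'a::complex_hilbert \<Rightarrow> 'a \<Rightarrow> complex" where
  "cinner x y = Complex (inner x y) (inner x (\<i> *\<^sub>C y))"

lemma norm_cinner_le: "cmod (cinner x y) \<le> 2 * norm x * norm y"
proof -
  have "cmod (cinner x y) \<le> \<bar>inner x y\<bar> + \<bar>inner x (\<i> *\<^sub>C y)\<bar>"
    using cmod_le[of "cinner x y"] by (simp add: cinner_def)
  also have "\<dots> \<le> norm x * norm y + norm x * norm (\<i> *\<^sub>C y)"
    by (intro add_mono Cauchy_Schwarz_ineq2)
  finally show ?thesis
    by (simp add: norm_scaleC_ii)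
qed

lemma bounded_linear_cinner_left: "bounded_linear (\<lambda>x. cinner x y)"
proof (rule bounded_linear_intro[where K="2 * norm y"])
  show "cmod (cinner x y) \<le> norm x * (2 * norm y)" for x
    using norm_cinner_le[of x y] by (simp add: mult_ac)
qed (simp_all add: cinner_def complex_eq_iff inner_add_left)

lemma cinner_scaleC_left: "cinner (c *\<^sub>C x) y = c * cinner x y"
  by (simp add: cinner_def complex_eq_iff scaleC_Re_Im[of c x] inner_add_left inner_scaleC_ii_left)

lemma cinner_diff_left: "cinner (x - y) z = cinner x z - cinner y z"
  by (simp add: cinner_def complex_eq_iff inner_diff_left)

lemma Re_cinner_self: "Re (cinner x x) = (norm x)\<^sup>2"
  by (simp add: cinner_def dot_square_norm)

lemma holomorphic_on_cinner_resolvent: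
  fixes E :: "'a::complex_hilbert \<Rightarrow>\<^sub>L 'a"
  assumes "open D" and R: "\<And>w. w \<in> D \<Longrightarrow> bop_inverse (R w) (id_blinfun - (scaleC_op w o\<^sub>L E))"
  shows "(\<lambda>w. cinner (R w x) y) holomorphic_on D"
proof -
  have "continuous_on D R"
    using R by (rule continuous_on_resolvent)
  have "((\<lambda>w. cinner (R w x) y) has_field_derivative cinner (R v (E (R v x))) y) (at v)"
    if "v \<in> D" for v
  proof -
    define h where "h w = cinner (R w (E (R v x))) y" for w
    have "(R \<longlongrightarrow> R v) (at v)"
      using \<open>continuous_on D R\<close> \<open>open D\<close> \<open>v \<in> D\<close> continuous_on_eq_continuous_at isCont_def
      by blast
    then have "(h \<longlongrightarrow> h v) (at v)"
      unfolding h_def by (intro bounded_linear.tendsto[OF bounded_linear_cinner_left] blinfun.tendsto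
          tendsto_const)
    moreover have "eventually (\<lambda>w. h w = (cinner (R w x) y - cinner (R v x) y) / (w - v)) (at v)"
      using eventually_at_in_open[OF \<open>open D\<close> \<open>v \<in> D\<close>]
    proof eventually_elim
      case (elim w)
      have "R w - R v
          = R w o\<^sub>L ((id_blinfun - (scaleC_op v o\<^sub>L E)) - (id_blinfun - (scaleC_op w o\<^sub>L E))) o\<^sub>L R v"
        using R[of w] R[OF \<open>v \<in> D\<close>] elim unfolding bop_inverse_def
        by (intro blinfun_inverse_diff) simp_all
      also have "(id_blinfun - (scaleC_op v o\<^sub>L E)) - (id_blinfun - (scaleC_op w o\<^sub>L E))
          = scaleC_op (w - v) o\<^sub>L E"
        by (rule blinfun_eqI) (simp add: blinfun.diff_left scaleC_diff_left)
      finally have "(R w - R v) x = (w - v) *\<^sub>C R w (E (R v x))"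
        using R[of w] elim by (simp add: bop_inverse_def bopD)
      then have "cinner (R w x) y - cinner (R v x) y = (w - v) * h w"
        by (simp add: h_def cinner_scaleC_left blinfun.diff_left flip: cinner_diff_left)
      then show ?case
        using elim by simp
    qed
    ultimately have "((\<lambda>w. (cinner (R w x) y - cinner (R v x) y) / (w - v)) \<longlongrightarrow> h v) (at v)"
      by (rule Lim_transform_eventually)
    then show ?thesis
      by (simp add: has_field_derivative_iff h_def)
  qed
  then show ?thesis
    using \<open>open D\<close> by (auto simp: holomorphic_on_open)
qed

lemma cinner_resolvent_sums:
  fixes E :: "'a::complex_hilbert \<Rightarrow>\<^sub>L 'a"
  assumes "E \<in> bop" and R: "bop_inverse R (id_blinfun - (scaleC_op w o\<^sub>L E))"
    and "cmod w * norm E < 1"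
  shows "(\<lambda>n. cinner ((E ^\<^sub>L n) x) y * w ^ n) sums cinner (R x) y"
proof -
  define A where "A = scaleC_op w o\<^sub>L E"
  have "norm A < 1"
    using norm_scaleC_op_compose_le[of w E] \<open>cmod w * norm E < 1\<close> by (simp add: A_def)
  then have "bop_inverse (\<Sum>n. A ^\<^sub>L n) (id_blinfun - A)"
    using \<open>E \<in> bop\<close> by (intro Neumann_series_bop_inverse) (simp_all add: A_def)
  then have "R = (\<Sum>n. A ^\<^sub>L n)"
    using R unfolding A_def bop_inverse_def by (metis bop_inverse_def bop_inverse_unique)
  then have "(\<lambda>n. (A ^\<^sub>L n) x) sums R x"
    using summable_norm_cancel[OF summable_norm_blinfun_pow[OF \<open>norm A < 1\<close>]]
    by (simp add: bounded_linear.sums[OF blinfun.bounded_linear_left summable_sums])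
  then have "(\<lambda>n. cinner ((A ^\<^sub>L n) x) y) sums cinner (R x) y"
    by (rule bounded_linear.sums[OF bounded_linear_cinner_left])
  then show ?thesis
    using \<open>E \<in> bop\<close>
    by (simp add: A_def blinfun_pow_scaleC_op_compose cinner_scaleC_left mult.commute)
qed

lemma norm_power_series_coeff_le:
  fixes f :: "complex \<Rightarrow> complex"
  assumes "f holomorphic_on ball 0 s" and "continuous_on (cball 0 s) f" and "0 < s" and "0 < \<delta>"
    and sums: "\<And>w. cmod w < \<delta> \<Longrightarrow> (\<lambda>n. a n * w ^ n) sums f w"
    and bound: "\<And>w. cmod w = s \<Longrightarrow> cmod (f w) \<le> B"
  shows "cmod (a n) \<le> B / s ^ n"
proof -
  define F where "F = Abs_fps a"
  have "summable (\<lambda>n. fps_nth F n * (complex_of_real (\<delta>/2)) ^ n)"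
    using sums[of "complex_of_real (\<delta>/2)"] \<open>0 < \<delta>\<close> by (auto simp: F_def sums_iff)
  then have "ereal (\<delta>/2) \<le> fps_conv_radius F"
    unfolding fps_conv_radius_def using conv_radius_geI[of "fps_nth F" "complex_of_real (\<delta>/2)"]
    using \<open>0 < \<delta>\<close> by simp
  then have "0 < fps_conv_radius F"
    using \<open>0 < \<delta>\<close> by (metis ereal_less(2) half_gt_zero less_le_trans zero_ereal_def)
  moreover have "eventually (\<lambda>w. w \<in> ball 0 \<delta>) (nhds 0)"
    using \<open>0 < \<delta>\<close> by (intro eventually_nhds_in_open) auto
  then have "eventually (\<lambda>w. eval_fps F w = f w) (nhds 0)"
  proof (rule eventually_mono)
    fix w :: complex
    assume "w \<in> ball 0 \<delta>"
    then show "eval_fps F w = f w"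
      using sums[of w] by (simp add: eval_fps_def F_def sums_iff)
  qed
  ultimately have "f has_fps_expansion F"
    by (simp add: has_fps_expansion_def)
  then have "a n = (deriv ^^ n) f 0 / fact n"
    using fps_nth_fps_expansion by (fastforce simp: F_def)
  then have "cmod (a n) = norm ((deriv ^^ n) f 0) / fact n"
    by (simp add: norm_divide)
  also have "\<dots> \<le> (fact n * B / s ^ n) / fact n"
    using assms(1-3) by (intro divide_right_mono Cauchy_inequality) (simp_all add: bound norm_minus_commute)
  also have "\<dots> = B / s ^ n"
    by simp
  finally show ?thesis .
qed

lemma norm_le_spectral_radius:
  assumes "E \<in> bop" and "z \<in> bop_spectrum E"
  shows "cmod z \<le> spectral_radius E"
proof -
  have "bdd_above (cmod ` bop_spectrum E)"
    using norm_le_if_in_bop_spectrum[OF \<open>E \<in> bop\<close>] by (intro bdd_aboveI[of _ "norm E"]) auto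
  then show ?thesis
    unfolding spectral_radius_def using assms(2) by (intro cSup_upper) auto
qed

lemma ex_bop_inverse_id_minus_scaleC_op_compose:
  assumes "E \<in> bop" and "cmod w * spectral_radius E < 1"
  shows "\<exists>R. bop_inverse R (id_blinfun - (scaleC_op w o\<^sub>L E))"
proof (cases "w = 0")
  case True
  then show ?thesis
    by (intro exI[of _ id_blinfun]) (simp add: bop_inverse_def)
next
  case False
  have "1 / w \<notin> bop_spectrum E"
  proof
    assume "1 / w \<in> bop_spectrum E"
    then have "cmod (1 / w) \<le> spectral_radius E"
      using \<open>E \<in> bop\<close> by (rule norm_le_spectral_radius[rotated])
    then have "1 \<le> cmod w * spectral_radius E"
      using False by (simp add: norm_divide field_simps)
    then show False
      using assms(2) by simp
  qed
  then obtain M where "bop_inverse M (E - scaleC_op (1 / w))"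
    using not_in_bop_spectrum_iff by blast
  then have "bop_inverse (M o\<^sub>L scaleC_op (1 / - w)) (scaleC_op (- w) o\<^sub>L (E - scaleC_op (1 / w)))"
    using False by (intro bop_inverse_scaleC_op_compose) auto
  then show ?thesis
    using id_minus_scaleC_op_compose_eq[OF False, of E] by auto
qed

text \<open>The Taylor coefficients at \<open>0\<close> of \<open>w \<mapsto> cinner (R w x) y\<close> are \<open>cinner (E\<^sup>n x) y\<close>;
  Cauchy's estimate on the circle \<open>|w| = s\<close> bounds them, and \<open>y = E\<^sup>n x\<close> gives the claim.\<close>

lemma norm_blinfun_pow_apply_le:
  fixes E :: "'a::complex_hilbert \<Rightarrow>\<^sub>L 'a"
  assumes "E \<in> bop" and "0 < s"
    and R: "\<And>w. cmod w \<le> s \<Longrightarrow> bop_inverse (R w) (id_blinfun - (scaleC_op w o\<^sub>L E))"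
    and Rm: "\<And>w. cmod w = s \<Longrightarrow> norm (R w) \<le> Rm"
  shows "norm ((E ^\<^sub>L n) x) \<le> 2 * Rm * norm x / s ^ n"
proof -
  define y where "y = (E ^\<^sub>L n) x"
  define \<delta> where "\<delta> = min s (1 / (norm E + 1))"
  have "0 < \<delta>"
    using \<open>0 < s\<close> by (simp add: \<delta>_def add_nonneg_pos)
  have "cmod (cinner ((E ^\<^sub>L n) x) y) \<le> 2 * Rm * norm x * norm y / s ^ n"
  proof (rule norm_power_series_coeff_le[where f="\<lambda>w. cinner (R w x) y"])
    show "(\<lambda>w. cinner (R w x) y) holomorphic_on ball 0 s"
      using R by (intro holomorphic_on_cinner_resolvent[where E=E]) auto
    have "continuous_on (cball 0 s) R"
      using R by (intro continuous_on_resolvent) auto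
    then show "continuous_on (cball 0 s) (\<lambda>w. cinner (R w x) y)"
      by (intro bounded_linear.continuous_on[OF bounded_linear_cinner_left] blinfun.continuous_on
          continuous_on_const)
    show "(\<lambda>k. cinner ((E ^\<^sub>L k) x) y * w ^ k) sums cinner (R w x) y" if "cmod w < \<delta>" for w
    proof (rule cinner_resolvent_sums[OF \<open>E \<in> bop\<close> R])
      have "cmod w * (norm E + 1) < 1"
        using that norm_ge_zero[of E] by (simp add: \<delta>_def pos_less_divide_eq)
      then show "cmod w * norm E < 1"
        using norm_ge_zero[of w] unfolding distrib_left by linarith
      show "cmod w \<le> s"
        using that by (simp add: \<delta>_def)
    qed
    show "cmod (cinner (R w x) y) \<le> 2 * Rm * norm x * norm y" if "cmod w = s" for w
    proof -
      have "cmod (cinner (R w x) y) \<le> 2 * norm (R w x) * norm y"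
        by (rule norm_cinner_le)
      also have "\<dots> \<le> 2 * (Rm * norm x) * norm y"
        using norm_blinfun[of "R w" x] mult_right_mono[OF Rm[OF that], of "norm x"]
        by (intro mult_right_mono mult_left_mono) auto
      finally show ?thesis
        by (simp add: mult_ac)
    qed
  qed (use \<open>0 < s\<close> \<open>0 < \<delta>\<close> in auto)
  moreover have "(norm y)\<^sup>2 \<le> cmod (cinner y y)"
    using Re_cinner_self[of y] abs_Re_le_cmod[of "cinner y y"] by simp
  ultimately have "norm y * norm y \<le> (2 * Rm * norm x / s ^ n) * norm y"
    by (simp add: y_def power2_eq_square)
  moreover have "0 \<le> Rm"
    using order_trans[OF norm_ge_zero Rm[of s]] \<open>0 < s\<close> by simp
  ultimately show ?thesis
    using \<open>0 < s\<close> by (cases "norm y = 0") (auto simp: y_def intro: mult_right_le_imp_le)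
qed

theorem norm_blinfun_pow_le_geometric:
  fixes E :: "'a::complex_hilbert \<Rightarrow>\<^sub>L 'a"
  assumes "E \<in> bop" and "spectral_radius E < 1"
  shows "\<exists>K \<rho>. 0 < \<rho> \<and> \<rho> < 1 \<and> (\<forall>n. norm (E ^\<^sub>L n) \<le> K * \<rho> ^ n)"
proof -
  \<comment> \<open>the \<open>max\<close> guards against the junk value of \<open>Sup {}\<close> when the spectrum is empty\<close>
  define r where "r = max (spectral_radius E) 0"
  have "0 \<le> r" "r < 1"
    using assms(2) by (auto simp: r_def)
  define s where "s = 2 / (1 + r)"
  have "1 < s" "s * r < 1"
    using \<open>0 \<le> r\<close> \<open>r < 1\<close> by (auto simp: s_def field_simps)
  have "cmod w * spectral_radius E < 1" if "cmod w \<le> s" for w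
  proof -
    have "cmod w * spectral_radius E \<le> cmod w * r"
      by (intro mult_left_mono) (simp_all add: r_def)
    also have "\<dots> \<le> s * r"
      using that \<open>0 \<le> r\<close> by (rule mult_right_mono)
    finally show ?thesis
      using \<open>s * r < 1\<close> by linarith
  qed
  then obtain R where R: "\<And>w. cmod w \<le> s \<Longrightarrow> bop_inverse (R w) (id_blinfun - (scaleC_op w o\<^sub>L E))"
    using ex_bop_inverse_id_minus_scaleC_op_compose[OF \<open>E \<in> bop\<close>] by metis
  have "continuous_on (cball 0 s) R"
    using R by (intro continuous_on_resolvent[where E=E]) auto
  then have "compact (R ` sphere 0 s)"
    by (intro compact_continuous_image continuous_on_subset[OF _ sphere_cball]) simp_all
  then obtain Rm where Rm: "\<And>w. cmod w = s \<Longrightarrow> norm (R w) \<le> Rm"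
    using compact_imp_bounded bounded_pos by (metis image_eqI mem_sphere_0)
  have "norm (E ^\<^sub>L n) \<le> 2 * Rm * (1 / s) ^ n" for n
  proof (rule norm_blinfun_bound)
    show "0 \<le> 2 * Rm * (1 / s) ^ n"
      using order_trans[OF norm_ge_zero Rm[of s]] \<open>1 < s\<close> by simp
    show "norm ((E ^\<^sub>L n) x) \<le> 2 * Rm * (1 / s) ^ n * norm x" for x
      using norm_blinfun_pow_apply_le[OF \<open>E \<in> bop\<close> _ R Rm] \<open>1 < s\<close>
      by (simp add: power_one_over field_simps)
  qed
  moreover have "0 < 1 / s" "1 / s < 1"
    using \<open>1 < s\<close> by auto
  ultimately show ?thesis
    by blast
qed

section \<open>Zero-product perturbations\<close>

lemma zero_product_perturbation_apply:
  assumes "E o\<^sub>L C = 0"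
  shows "E ((C + E) x) = E (E x)"
proof -
  have "E (C x) = 0"
    using assms by (metis blinfun_apply_blinfun_compose zero_blinfun.rep_eq)
  then show ?thesis
    by (simp add: blinfun.add_left blinfun.add_right)
qed

lemma zero_product_perturbation_pow_apply:
  assumes "E o\<^sub>L C = 0"
  shows "(E ^\<^sub>L Suc n) ((C + E) x) = (E ^\<^sub>L Suc (Suc n)) x"
    and "E (((C + E) ^\<^sub>L n) x) = (E ^\<^sub>L Suc n) x"
proof -
  show step: "(E ^\<^sub>L Suc n) ((C + E) x) = (E ^\<^sub>L Suc (Suc n)) x" for n x
    by (simp only: blinfun_pow_apply_Suc' zero_product_perturbation_apply[OF assms])
  show "E (((C + E) ^\<^sub>L n) x) = (E ^\<^sub>L Suc n) x"
  proof (induction n arbitrary: x)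
    case (Suc n)
    then show ?case
      by (simp only: blinfun_pow_apply_Suc'[of "C + E"] step)
  qed simp
qed

lemma norm_zero_product_perturbation_pow_le:
  assumes "norm C \<le> 1" and "E o\<^sub>L C = 0"
    and "0 \<le> K" and "0 < \<rho>" and "\<rho> < 1" and decay: "\<And>n. norm (E ^\<^sub>L n) \<le> K * \<rho> ^ n"
  shows "norm ((C + E) ^\<^sub>L n) \<le> 1 + K / (1 - \<rho>)"
proof -
  have partial: "norm (((C + E) ^\<^sub>L n) x) \<le> (1 + K * (\<Sum>k<n. \<rho> ^ Suc k)) * norm x" for n x
  proof (induction n)
    case (Suc n)
    have "norm (((C + E) ^\<^sub>L Suc n) x)
        \<le> norm (C (((C + E) ^\<^sub>L n) x)) + norm (E (((C + E) ^\<^sub>L n) x))"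
      by (simp add: blinfun.add_left norm_triangle_ineq)
    also have "norm (C (((C + E) ^\<^sub>L n) x)) \<le> norm (((C + E) ^\<^sub>L n) x)"
      using \<open>norm C \<le> 1\<close> by (rule norm_blinfun_apply_le_if_norm_le_1)
    also have "norm (E (((C + E) ^\<^sub>L n) x)) \<le> K * \<rho> ^ Suc n * norm x"
      unfolding zero_product_perturbation_pow_apply(2)[OF \<open>E o\<^sub>L C = 0\<close>]
      using norm_blinfun[of "E ^\<^sub>L Suc n" x] decay[of "Suc n"]
      by (meson mult_right_mono norm_ge_zero order_trans)
    finally show ?case
      using Suc by (simp add: algebra_simps)
  qed simp
  have "(\<Sum>k<n. \<rho> ^ Suc k) \<le> (\<Sum>k<n. \<rho> ^ k)"
    using \<open>0 < \<rho>\<close> \<open>\<rho> < 1\<close> by (intro sum_mono power_decreasing) auto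
  also have "\<dots> = (1 - \<rho> ^ n) / (1 - \<rho>)"
    using \<open>\<rho> < 1\<close> by (simp add: sum_gp_strict)
  also have "\<dots> \<le> 1 / (1 - \<rho>)"
    using \<open>0 < \<rho>\<close> \<open>\<rho> < 1\<close> by (intro divide_right_mono) auto
  finally have "K * (\<Sum>k<n. \<rho> ^ Suc k) \<le> K * (1 / (1 - \<rho>))"
    using \<open>0 \<le> K\<close> by (rule mult_left_mono)
  then have "1 + K * (\<Sum>k<n. \<rho> ^ Suc k) \<le> 1 + K / (1 - \<rho>)"
    by simp
  then have "norm (((C + E) ^\<^sub>L n) x) \<le> (1 + K / (1 - \<rho>)) * norm x" for x
    using partial[of n x] mult_right_mono[of _ _ "norm x"] by (simp add: order_trans)
  then show ?thesis
    using \<open>0 \<le> K\<close> \<open>\<rho> < 1\<close> by (intro norm_blinfun_bound) auto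
qed

definition quadratic_form_op ::
    "('a::{real_inner,complete_space} \<Rightarrow>\<^sub>L 'a) \<Rightarrow> ('a \<Rightarrow>\<^sub>L 'a) \<Rightarrow> real \<Rightarrow> 'a \<Rightarrow>\<^sub>L 'a" where
  "quadratic_form_op A B c = (adjoint A o\<^sub>L B) + (adjoint B o\<^sub>L A) + c *\<^sub>R (adjoint B o\<^sub>L B)"

lemma inner_quadratic_form_op:
  "inner (quadratic_form_op A B c x) x = 2 * inner (A x) (B x) + c * (norm (B x))\<^sup>2"
proof -
  have "inner (quadratic_form_op A B c x) x
      = inner (B x) (A x) + inner (A x) (B x) + c * inner (B x) (B x)"
    by (simp add: quadratic_form_op_def blinfun.add_left blinfun.scaleR_left inner_add_left
        inner_adjoint_left)
  then show ?thesis
    by (simp add: inner_commute[of "B x" "A x"] power2_norm_eq_inner)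
qed

lemma selfadjoint_quadratic_form_op: "selfadjoint (quadratic_form_op A B c)"
  unfolding quadratic_form_op_def
  by (intro selfadjoint_add selfadjoint_scaleR selfadjoint_adjoint_compose_sym
      selfadjoint_adjoint_compose)

lemma bop_quadratic_form_op: "A \<in> bop \<Longrightarrow> B \<in> bop \<Longrightarrow> quadratic_form_op A B c \<in> bop"
  by (simp add: quadratic_form_op_def bop_adjoint)

lemma norm_quadratic_form_op_le:
  "norm (quadratic_form_op A B c) \<le> 2 * norm A * norm B + \<bar>c\<bar> * (norm B)\<^sup>2"
proof -
  have "norm (quadratic_form_op A B c)
      \<le> norm (adjoint A) * norm B + norm (adjoint B) * norm A + \<bar>c\<bar> * (norm (adjoint B) * norm B)"
    unfolding quadratic_form_op_def
    by (intro norm_triangle_le add_mono norm_blinfun_compose)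
      (simp add: mult_left_mono norm_blinfun_compose)
  also have "\<dots> \<le> norm A * norm B + norm B * norm A + \<bar>c\<bar> * (norm B * norm B)"
    by (intro add_mono mult_left_mono mult_right_mono norm_adjoint_le) simp_all
  finally show ?thesis
    by (simp add: power2_eq_square)
qed

lemma summable_norm_quadratic_form_op:
  fixes A B :: "nat \<Rightarrow> 'a::{real_inner,complete_space} \<Rightarrow>\<^sub>L 'a"
  assumes "0 \<le> P" and "0 < \<rho>" and "\<rho> < 1"
    and A: "\<And>k. norm (A k) \<le> P" and B: "\<And>k. norm (B k) \<le> K * \<rho> ^ Suc k"
  shows "summable (\<lambda>k. norm (quadratic_form_op (A k) (B k) (P\<^sup>2 / ((1 - \<rho>) / 2 * \<rho> ^ k))))"
proof -
  define b where "b k = P\<^sup>2 / ((1 - \<rho>) / 2 * \<rho> ^ k)" for k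
  define c where "c = (2 * P * K + 2 * P\<^sup>2 * K\<^sup>2 / (1 - \<rho>)) * \<rho>"
  have bound: "norm (quadratic_form_op (A k) (B k) (b k)) \<le> c * \<rho> ^ k" for k
  proof -
    have "0 \<le> b k"
      using \<open>0 < \<rho>\<close> \<open>\<rho> < 1\<close> by (simp add: b_def)
    have "norm (quadratic_form_op (A k) (B k) (b k)) \<le> 2 * norm (A k) * norm (B k) + b k * (norm (B k))\<^sup>2"
      using norm_quadratic_form_op_le[of "A k" "B k" "b k"] \<open>0 \<le> b k\<close> by simp
    also have "\<dots> \<le> 2 * P * (K * \<rho> ^ Suc k) + b k * (K * \<rho> ^ Suc k)\<^sup>2"
      using A[of k] B[of k] \<open>0 \<le> P\<close> \<open>0 \<le> b k\<close>
      by (intro add_mono mult_mono mult_left_mono power_mono) simp_all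
    also have "b k * (K * \<rho> ^ Suc k)\<^sup>2 = 2 * P\<^sup>2 * K\<^sup>2 / (1 - \<rho>) * \<rho> ^ Suc k * \<rho>"
      using \<open>0 < \<rho>\<close> \<open>\<rho> < 1\<close> by (simp add: b_def power2_eq_square field_simps)
    also have "\<dots> \<le> 2 * P\<^sup>2 * K\<^sup>2 / (1 - \<rho>) * \<rho> ^ Suc k"
      using \<open>0 < \<rho>\<close> \<open>\<rho> < 1\<close> by (intro mult_left_le) simp_all
    finally show ?thesis
      by (simp add: c_def algebra_simps)
  qed
  have "summable (\<lambda>k. c * \<rho> ^ k)"
    using \<open>0 < \<rho>\<close> \<open>\<rho> < 1\<close> by (intro summable_mult summable_geometric) simp
  then show ?thesis
    by (rule summable_comparison_test'[where N=0]) (use bound in \<open>simp add: b_def\<close>)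
qed

lemma norm_perturbation_apply_squared_le:
  fixes C E :: "'a::{real_inner,complete_space} \<Rightarrow>\<^sub>L 'a"
  assumes "norm C \<le> 1" and "0 \<le> c"
  shows "(norm ((C + E) x))\<^sup>2 \<le> (norm x)\<^sup>2 + inner (quadratic_form_op (C + E) E c x) x"
proof -
  have "(norm ((C + E) x))\<^sup>2 = (norm (C x))\<^sup>2 + 2 * inner ((C + E) x) (E x) - (norm (E x))\<^sup>2"
    by (simp add: blinfun.add_left power2_norm_eq_inner inner_add_left inner_add_right inner_commute)
  moreover have "(norm (C x))\<^sup>2 \<le> (norm x)\<^sup>2"
    using norm_blinfun_apply_le_if_norm_le_1[OF \<open>norm C \<le> 1\<close>] by (simp add: power_mono)
  moreover have "0 \<le> c * (norm (E x))\<^sup>2"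
    using \<open>0 \<le> c\<close> by simp
  moreover have "inner (quadratic_form_op (C + E) E c x) x
      = 2 * inner ((C + E) x) (E x) + c * (norm (E x))\<^sup>2"
    by (rule inner_quadratic_form_op)
  ultimately show ?thesis
    using zero_le_power2[of "norm (E x)"] by linarith
qed

text \<open>The hypotheses make \<open>G = id + (\<Sum>k. D k)\<close> a Lyapunov operator for \<open>T\<close>:
  \<open>\<langle>G x, x\<rangle> \<ge> \<parallel>x\<parallel>\<^sup>2/2\<close> and \<open>\<langle>G (T x), T x\<rangle> \<le> \<langle>G x, x\<rangle>\<close>, the latter by telescoping.\<close>

lemma similar_to_contraction_if_telescoping:
  fixes T :: "'a::complex_hilbert \<Rightarrow>\<^sub>L 'a" and D :: "nat \<Rightarrow> 'a \<Rightarrow>\<^sub>L 'a"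
  assumes summable: "summable (\<lambda>k. norm (D k))"
    and "\<And>k. D k \<in> bop" and "\<And>k. selfadjoint (D k)"
    and lower: "\<And>k x. - (\<epsilon> k * (norm x)\<^sup>2) \<le> inner (D k x) x" and "\<epsilon> sums (1/2)"
    and first: "\<And>x. (norm (T x))\<^sup>2 \<le> (norm x)\<^sup>2 + inner (D 0 x) x"
    and step: "\<And>k x. inner (D k (T x)) (T x) \<le> inner (D (Suc k) x) x"
  shows "similar_to_contraction T"
proof -
  define G where "G = id_blinfun + (\<Sum>k. D k)"
  have form: "(\<lambda>k. inner (D k x) x) sums (inner (G x) x - (norm x)\<^sup>2)" for x
    using sums_inner_blinfun_apply[OF summable_norm_cancel[OF summable], of x x]
    by (simp add: G_def blinfun.add_left inner_add_left power2_norm_eq_inner)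
  show ?thesis
  proof (rule similar_to_contraction_if_Lyapunov)
    show "G \<in> bop"
      unfolding G_def using assms(2) by (simp add: bop_suminf summable_norm_cancel[OF summable])
    show "selfadjoint G"
      unfolding G_def using assms(3)
      by (intro selfadjoint_add selfadjoint_id selfadjoint_suminf summable_norm_cancel[OF summable])
    show "1/2 * (norm x)\<^sup>2 \<le> inner (G x) x" for x
    proof -
      have "(\<lambda>k. - (\<epsilon> k * (norm x)\<^sup>2)) sums (- (1/2 * (norm x)\<^sup>2))"
        using sums_mult2[OF \<open>\<epsilon> sums (1/2)\<close>, of "(norm x)\<^sup>2"] by (intro sums_minus) simp
      from sums_le[OF lower this form] show ?thesis
        by simp
    qed
    show "inner (G (T x)) (T x) \<le> inner (G x) x" for x
    proof -
      have "(\<lambda>k. inner (D (Suc k) x) x) sums (inner (G x) x - (norm x)\<^sup>2 - inner (D 0 x) x)"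
        using sums_Suc_iff[of "\<lambda>k. inner (D k x) x"] form[of x] by simp
      from sums_le[OF step form[of "T x"] this] first[of x] show ?thesis
        by linarith
    qed
  qed simp
qed

lemma quadratic_form_op_lower_bound:
  assumes "0 < e" and "norm A \<le> P"
  shows "- (e * (norm x)\<^sup>2) \<le> inner (quadratic_form_op A B (P\<^sup>2 / e) x) x"
proof -
  have "\<bar>inner (A x) (B x)\<bar> \<le> P * norm x * norm (B x)"
    using Cauchy_Schwarz_ineq2[of "A x" "B x"] norm_blinfun[of A x] \<open>norm A \<le> P\<close>
    by (meson mult_right_mono norm_ge_zero order_trans)
  moreover have "2 * (P * norm x * norm (B x)) \<le> e * (norm x)\<^sup>2 + P\<^sup>2 / e * (norm (B x))\<^sup>2"
  proof -
    have "0 \<le> (e * norm x - P * norm (B x))\<^sup>2 / e"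
      using \<open>0 < e\<close> by simp
    also have "\<dots> = e * (norm x)\<^sup>2 + P\<^sup>2 / e * (norm (B x))\<^sup>2 - 2 * (P * norm x * norm (B x))"
      using \<open>0 < e\<close> by (simp add: power2_eq_square field_simps)
    finally show ?thesis
      by simp
  qed
  ultimately show ?thesis
    by (simp add: inner_quadratic_form_op abs_le_iff)
qed

lemma similar_to_contraction_zero_product_perturbation_of_contraction:
  fixes C E :: "'a::complex_hilbert \<Rightarrow>\<^sub>L 'a"
  assumes "C \<in> bop" and "E \<in> bop" and "norm C \<le> 1" and "E o\<^sub>L C = 0"
    and "0 \<le> K" and "0 < \<rho>" and "\<rho> < 1" and decay: "\<And>n. norm (E ^\<^sub>L n) \<le> K * \<rho> ^ n"
  shows "similar_to_contraction (C + E)"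
proof -
  define T where "T = C + E"
  define P where "P = 1 + K / (1 - \<rho>)"
  have "0 \<le> P"
    using \<open>0 \<le> K\<close> \<open>\<rho> < 1\<close> by (simp add: P_def)
  have T_pow: "norm (T ^\<^sub>L n) \<le> P" for n
    unfolding T_def P_def using assms(3-) by (rule norm_zero_product_perturbation_pow_le)
  define \<epsilon> where "\<epsilon> k = (1 - \<rho>) / 2 * \<rho> ^ k" for k
  have "0 < \<epsilon> k" for k
    using \<open>0 < \<rho>\<close> \<open>\<rho> < 1\<close> by (simp add: \<epsilon>_def)
  define b where "b k = P\<^sup>2 / \<epsilon> k" for k
  define D where "D k = quadratic_form_op (T ^\<^sub>L Suc k) (E ^\<^sub>L Suc k) (b k)" for k
  show ?thesis
    unfolding T_def[symmetric]
  proof (rule similar_to_contraction_if_telescoping[where D=D and \<epsilon>=\<epsilon>])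
    show "summable (\<lambda>k. norm (D k))"
      unfolding D_def b_def \<epsilon>_def using \<open>0 \<le> P\<close> \<open>0 < \<rho>\<close> \<open>\<rho> < 1\<close> T_pow decay
      by (rule summable_norm_quadratic_form_op)
    show "D k \<in> bop" for k
      using assms(1,2) by (simp add: D_def T_def bop_quadratic_form_op)
    show "selfadjoint (D k)" for k
      by (simp add: D_def selfadjoint_quadratic_form_op)
    show "- (\<epsilon> k * (norm x)\<^sup>2) \<le> inner (D k x) x" for k x
      unfolding D_def b_def using \<open>0 < \<epsilon> k\<close> T_pow by (rule quadratic_form_op_lower_bound)
    have "(\<lambda>k. (1 - \<rho>) / 2 * \<rho> ^ k) sums ((1 - \<rho>) / 2 * (1 / (1 - \<rho>)))"
      using \<open>0 < \<rho>\<close> \<open>\<rho> < 1\<close> by (intro sums_mult geometric_sums) simp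
    moreover have "(1 - \<rho>) / 2 * (1 / (1 - \<rho>)) = 1/2"
      using \<open>\<rho> < 1\<close> by simp
    ultimately show "\<epsilon> sums (1/2)"
      unfolding \<epsilon>_def[abs_def] by (simp only:)
    show "(norm (T x))\<^sup>2 \<le> (norm x)\<^sup>2 + inner (D 0 x) x" for x
      unfolding T_def D_def using \<open>norm C \<le> 1\<close> \<open>0 < \<epsilon> 0\<close>
      by (simp add: b_def norm_perturbation_apply_squared_le)
    show "inner (D k (T x)) (T x) \<le> inner (D (Suc k) x) x" for k x
    proof -
      have "(E ^\<^sub>L Suc k) (T x) = (E ^\<^sub>L Suc (Suc k)) x"
        unfolding T_def by (rule zero_product_perturbation_pow_apply(1)[OF \<open>E o\<^sub>L C = 0\<close>])
      then have "inner (D k (T x)) (T x) = 2 * inner ((T ^\<^sub>L Suc (Suc k)) x) ((E ^\<^sub>L Suc (Suc k)) x)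
          + b k * (norm ((E ^\<^sub>L Suc (Suc k)) x))\<^sup>2"
        by (simp only: D_def inner_quadratic_form_op blinfun_pow_apply_Suc'[symmetric])
      also have "\<dots> \<le> inner (D (Suc k) x) x"
      proof -
        have "b k \<le> b (Suc k)"
          unfolding b_def using \<open>0 < \<epsilon> (Suc k)\<close> \<open>0 < \<rho>\<close> \<open>\<rho> < 1\<close>
          by (intro divide_left_mono) (simp_all add: \<epsilon>_def mult_left_le_one_le)
        then show ?thesis
          by (simp add: D_def inner_quadratic_form_op mult_right_mono)
      qed
      finally show ?thesis .
    qed
  qed
qed

lemma blinfun_pow_conjugate:
  assumes "M o\<^sub>L L = id_blinfun" and "L o\<^sub>L M = id_blinfun"
  shows "(M o\<^sub>L A o\<^sub>L L) ^\<^sub>L n = M o\<^sub>L A ^\<^sub>L n o\<^sub>L L"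
proof (induction n)
  case (Suc n)
  have "M o\<^sub>L A o\<^sub>L L o\<^sub>L (M o\<^sub>L A ^\<^sub>L n o\<^sub>L L) = M o\<^sub>L A o\<^sub>L (L o\<^sub>L M) o\<^sub>L A ^\<^sub>L n o\<^sub>L L"
    by (simp add: blinfun_compose_assoc)
  with Suc assms(2) show ?case
    by (simp add: blinfun_compose_assoc)
qed (use assms(1) in simp)

lemma geometric_decay_conjugate:
  assumes "M o\<^sub>L L = id_blinfun" and "L o\<^sub>L M = id_blinfun" and "0 \<le> \<rho>"
    and decay: "\<And>n. norm (A ^\<^sub>L n) \<le> K * \<rho> ^ n"
  shows "norm ((M o\<^sub>L A o\<^sub>L L) ^\<^sub>L n) \<le> (norm M * max K 0 * norm L) * \<rho> ^ n"
proof -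
  have "norm ((M o\<^sub>L A o\<^sub>L L) ^\<^sub>L n) \<le> norm M * norm (A ^\<^sub>L n) * norm L"
    unfolding blinfun_pow_conjugate[OF assms(1,2)] by (rule norm_blinfun_compose3)
  also have "\<dots> \<le> norm M * (max K 0 * \<rho> ^ n) * norm L"
  proof -
    have "K * \<rho> ^ n \<le> max K 0 * \<rho> ^ n"
      using \<open>0 \<le> \<rho>\<close> by (intro mult_right_mono) simp_all
    then show ?thesis
      using decay[of n] by (intro mult_right_mono mult_left_mono) simp_all
  qed
  finally show ?thesis
    by (simp add: mult_ac)
qed

lemma zero_product_conjugate:
  assumes "L o\<^sub>L M = id_blinfun" and "E o\<^sub>L C = 0"
  shows "(M o\<^sub>L E o\<^sub>L L) o\<^sub>L (M o\<^sub>L C o\<^sub>L L) = 0"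
proof -
  have "(M o\<^sub>L E o\<^sub>L L) o\<^sub>L (M o\<^sub>L C o\<^sub>L L) = M o\<^sub>L E o\<^sub>L (L o\<^sub>L M) o\<^sub>L C o\<^sub>L L"
    by (simp add: blinfun_compose_assoc)
  also have "\<dots> = M o\<^sub>L (E o\<^sub>L C) o\<^sub>L L"
    using assms(1) by (simp add: blinfun_compose_assoc)
  finally show ?thesis
    using assms(2) by simp
qed

lemma similar_to_contraction_conjugate:
  assumes "L \<in> bop" and "M \<in> bop" and "M o\<^sub>L L = id_blinfun" and "L o\<^sub>L M = id_blinfun"
    and "similar_to_contraction (M o\<^sub>L T o\<^sub>L L)"
  shows "similar_to_contraction T"
proof -
  obtain L' M' where "L' \<in> bop" "M' \<in> bop" "M' o\<^sub>L L' = id_blinfun" "L' o\<^sub>L M' = id_blinfun"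
    and contraction: "norm (M' o\<^sub>L (M o\<^sub>L T o\<^sub>L L) o\<^sub>L L') \<le> 1"
    using assms(5) unfolding similar_to_contraction_def invertible_bop_def by blast
  have "(M' o\<^sub>L M) o\<^sub>L (L o\<^sub>L L') = id_blinfun" "(L o\<^sub>L L') o\<^sub>L (M' o\<^sub>L M) = id_blinfun"
    using assms(3,4) \<open>M' o\<^sub>L L' = id_blinfun\<close> \<open>L' o\<^sub>L M' = id_blinfun\<close>
    unfolding blinfun_compose_eq_id_iff by simp_all
  moreover have "M' o\<^sub>L M o\<^sub>L T o\<^sub>L (L o\<^sub>L L') = M' o\<^sub>L (M o\<^sub>L T o\<^sub>L L) o\<^sub>L L'"
    by (simp add: blinfun_compose_assoc)
  ultimately show ?thesis
    unfolding similar_to_contraction_def invertible_bop_def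
    using assms(1,2) \<open>L' \<in> bop\<close> \<open>M' \<in> bop\<close> contraction
    by (intro exI[of _ "L o\<^sub>L L'"] exI[of _ "M' o\<^sub>L M"]) auto
qed

theorem theorem3p2:
  fixes C E :: "'a::complex_hilbert \<Rightarrow>\<^sub>L 'a"
  assumes "C \<in> bop" and "similar_to_contraction C"
    and "E \<in> bop" and "spectral_radius E < 1"
    and "E o\<^sub>L C = 0"
  shows "similar_to_contraction (C + E)"
proof -
  obtain L M where "L \<in> bop" "M \<in> bop" and inv: "M o\<^sub>L L = id_blinfun" "L o\<^sub>L M = id_blinfun"
    and contraction: "norm (M o\<^sub>L C o\<^sub>L L) \<le> 1"
    using assms(2) unfolding similar_to_contraction_def invertible_bop_def by blast
  obtain K \<rho> where "0 < \<rho>" "\<rho> < 1" and decay: "\<And>n. norm (E ^\<^sub>L n) \<le> K * \<rho> ^ n"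
    using norm_blinfun_pow_le_geometric[OF assms(3,4)] by blast
  have "similar_to_contraction ((M o\<^sub>L C o\<^sub>L L) + (M o\<^sub>L E o\<^sub>L L))"
    by (rule similar_to_contraction_zero_product_perturbation_of_contraction[OF _ _ contraction
          zero_product_conjugate[OF inv(2) assms(5)] _ \<open>0 < \<rho>\<close> \<open>\<rho> < 1\<close>
          geometric_decay_conjugate[OF inv _ decay]])
      (use \<open>L \<in> bop\<close> \<open>M \<in> bop\<close> assms(1,3) \<open>0 < \<rho>\<close> in simp_all)
  moreover have "(M o\<^sub>L C o\<^sub>L L) + (M o\<^sub>L E o\<^sub>L L) = M o\<^sub>L (C + E) o\<^sub>L L"
    by (simp add: compose.add_left compose.add_right)
  ultimately show ?thesis
    using similar_to_contraction_conjugate[OF \<open>L \<in> bop\<close> \<open>M \<in> bop\<close> inv] by simp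
qed

end
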